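(* Let $\Gamma$ be a connected signed graph such that $\Gamma_+$ is connected and $\Gamma_-$ has exactly two edges $e,f$, which do not share a vertex. Then \[ \mathcal{M}(\Gamma(t))=t^2|\gamma_e\gamma_f|\,\mathcal{M}(\Gamma_{.e.f})-t\big(|\gamma_e|\,\mathcal{M}(\Gamma_{.e\setminus f})+|\gamma_f|\,\mathcal{M}(\Gamma_{\setminus e.f})\big)+\mathcal{M}(\Gamma_{\setminus e\setminus f}), \] and $t^\star(\Gamma)$ is the minimal positive root of this polynomial.
   Context: A signed graph $\Gamma$ is a finite simple undirected graph with vertex set $\{1,\dots,N\}$ in which every edge $\{i,j\}$ carries a nonzero real weight $\gamma_{ij}$, which may be of either sign. $\Gamma_+$ (resp. $\Gamma_-$) is the spanning subgraph on all vertices containing exactly the positively (resp. negatively) weighted edges. For real $t$, $\Gamma(t)$ has the same edges and weights $\gamma_{ij}$ on positive edges and $t\gamma_{ij}$ on negative edges. For a weighted multigraph $H$ (loops and parallel edges allowed), $\mathcal{M}(H)=\sum_T\prod_{e\in E(T)}w(e)$, summed over spanning trees $T$ of $H$ (parallel edges give distinct trees; $\mathcal{M}(H)=0$ if $H$ is disconnected). For an edge $e$, $\Gamma_{\setminus e}$ is obtained by deleting $e$, and $\Gamma_{.e}$ is obtained by contracting $e$: its two endpoints are identified into one vertex, every other edge incident to either endpoint becomes incident to the new vertex (keeping its weight), and $e$ is removed. Compound symbols denote successive operations: $\Gamma_{.e.f}$ contract $e$ then $f$; $\Gamma_{.e\setminus f}$ contract $e$ and delete $f$; $\Gamma_{\setminus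 e.f}$ delete $e$ and contract $f$; $\Gamma_{\setminus e\setminus f}$ delete both. For a signed graph, $n_+(\cdot)$ denotes the number of positive eigenvalues of the Laplacian (off-diagonal entries the weights, diagonal entries minus the row sums), and $t^\star(\Gamma)=\sup\{t\ge0: n_+(\Gamma(t))=0\}$. *)

theory Defs
  imports Complex_Main "Jordan_Normal_Form.Char_Poly"
begin

section \<open>Weighted multigraphs (loops and parallel edges allowed)\<close>

record ('v,'e) wgraph =
  verts :: "'v set"
  arcs  :: "'e set"
  ends  :: "'e \<Rightarrow> 'v \<times> 'v"
  wt    :: "'e \<Rightarrow> real"

definition adj_rel :: "('v,'e) wgraph \<Rightarrow> 'e set \<Rightarrow> ('v \<times> 'v) set" where
  "adj_rel H T = {(a,b). \<exists>e\<in>T. ends H e = (a,b) \<or> ends H e = (b,a)}"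

definition joined :: "('v,'e) wgraph \<Rightarrow> 'e set \<Rightarrow> 'v \<Rightarrow> 'v \<Rightarrow> bool" where
  "joined H T u v \<longleftrightarrow> (u,v) \<in> (adj_rel H T)\<^sup>*"

definition connected_by :: "('v,'e) wgraph \<Rightarrow> 'e set \<Rightarrow> bool" where
  "connected_by H T \<longleftrightarrow> (\<forall>u\<in>verts H. \<forall>v\<in>verts H. joined H T u v)"

definition acyclic_edges :: "('v,'e) wgraph \<Rightarrow> 'e set \<Rightarrow> bool" where
  "acyclic_edges H T \<longleftrightarrow>
     (\<forall>e\<in>T. fst (ends H e) \<noteq> snd (ends H e) \<and>
             \<not> joined H (T - {e}) (fst (ends H e)) (snd (ends H e)))"

definition spanning_tree :: "('v,'e) wgraph \<Rightarrow> 'e set \<Rightarrow> bool" where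
  "spanning_tree H T \<longleftrightarrow> T \<subseteq> arcs H \<and> connected_by H T \<and> acyclic_edges H T"

definition tree_sum :: "('v,'e) wgraph \<Rightarrow> real" where
  "tree_sum H = (\<Sum>T\<in>{T. spanning_tree H T}. \<Prod>e\<in>T. wt H e)"

definition delete_edge :: "('v,'e) wgraph \<Rightarrow> 'e \<Rightarrow> ('v,'e) wgraph" where
  "delete_edge H e = H\<lparr>arcs := arcs H - {e}\<rparr>"

definition contract_edge :: "('v,'e) wgraph \<Rightarrow> 'e \<Rightarrow> ('v,'e) wgraph" where
  "contract_edge H e =
     (let m = (\<lambda>v. if v = snd (ends H e) then fst (ends H e) else v)
      in \<lparr>verts = m ` verts H, arcs = arcs H - {e},
          ends = map_prod m m \<circ> ends H, wt = wt H\<rparr>)"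

text \<open>gam i j = weight of edge {i,j}, 0 meaning no edge\<close>
definition signed_graph :: "nat \<Rightarrow> (nat \<Rightarrow> nat \<Rightarrow> real) \<Rightarrow> bool" where
  "signed_graph N gam \<longleftrightarrow> (\<forall>i j. gam i j = gam j i) \<and> (\<forall>i. gam i i = 0) \<and>
      (\<forall>i j. N \<le> i \<or> N \<le> j \<longrightarrow> gam i j = 0)"

definition sg_edges :: "nat \<Rightarrow> (nat \<Rightarrow> nat \<Rightarrow> real) \<Rightarrow> (nat \<times> nat) set" where
  "sg_edges N gam = {(i,j). i < j \<and> j < N \<and> gam i j \<noteq> 0}"

definition wt_t :: "(nat \<Rightarrow> nat \<Rightarrow> real) \<Rightarrow> real \<Rightarrow> nat \<Rightarrow> nat \<Rightarrow> real" where
  "wt_t gam t i j = (if gam i j > 0 then gam i j else t * gam i j)"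

definition sg_graph :: "nat \<Rightarrow> (nat \<Rightarrow> nat \<Rightarrow> real) \<Rightarrow> (nat, nat \<times> nat) wgraph" where
  "sg_graph N gam = \<lparr>verts = {..<N}, arcs = sg_edges N gam, ends = id,
                     wt = (\<lambda>(i,j). gam i j)\<rparr>"

definition sg_graph_t :: "nat \<Rightarrow> (nat \<Rightarrow> nat \<Rightarrow> real) \<Rightarrow> real \<Rightarrow> (nat, nat \<times> nat) wgraph" where
  "sg_graph_t N gam t = (sg_graph N gam)\<lparr>wt := (\<lambda>(i,j). wt_t gam t i j)\<rparr>"

definition pos_edges :: "nat \<Rightarrow> (nat \<Rightarrow> nat \<Rightarrow> real) \<Rightarrow> (nat \<times> nat) set" where
  "pos_edges N gam = {e \<in> sg_edges N gam. gam (fst e) (snd e) > 0}"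

definition neg_edges :: "nat \<Rightarrow> (nat \<Rightarrow> nat \<Rightarrow> real) \<Rightarrow> (nat \<times> nat) set" where
  "neg_edges N gam = {e \<in> sg_edges N gam. gam (fst e) (snd e) < 0}"

definition laplacian_t :: "nat \<Rightarrow> (nat \<Rightarrow> nat \<Rightarrow> real) \<Rightarrow> real \<Rightarrow> real mat" where
  "laplacian_t N gam t = mat N N (\<lambda>(i,j). if i = j then - (\<Sum>k<N. wt_t gam t i k)
                                           else wt_t gam t i j)"

definition n_plus :: "real mat \<Rightarrow> nat" where
  "n_plus A = (\<Sum>x\<in>{x. x > 0 \<and> poly (char_poly A) x = 0}. order x (char_poly A))"

definition t_star :: "nat \<Rightarrow> (nat \<Rightarrow> nat \<Rightarrow> real) \<Rightarrow> real" where
  "t_star N gam = Sup {t. t \<ge> 0 \<and> n_plus (laplacian_t N gam t) = 0}"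

end

theory Submission
  imports Defs
begin

text \<open>Deleting and contracting the two negative edges e and f expresses the weighted
  spanning-tree count of \<Gamma>(t) as the stated quadratic in t. By the matrix-tree theorem this
  count is the determinant of the reduced Laplacian R(t) of \<Gamma>(t), whose quadratic form is the
  energy A(x) - t B(x) with A, B \<ge> 0 the contributions of the positive and negative edges. Hence
  laplacian_t (the negative of the usual Laplacian) has no positive eigenvalue exactly for
  t \<in> [0, t*]. For 0 \<le> t < t* a kernel vector of R(t) would have A = 0, so it is constant on
  the connected positive part of \<Gamma> and vanishes because it vanishes at the root; thus det R(t) \<noteq> 0.
  At t* the determinant vanishes: otherwise R(t*) would be positive definite and the energy
  would stay nonnegative slightly beyond t*.\<close>

section \<open>Paths and spanning trees\<close>

lemma adj_rel_mono: "S \<subseteq> T \<Longrightarrow> adj_rel H S \<subseteq> adj_rel H T"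
  unfolding adj_rel_def by auto

lemma joined_mono: "joined H S u v \<Longrightarrow> S \<subseteq> T \<Longrightarrow> joined H T u v"
  unfolding joined_def by (meson adj_rel_mono rtrancl_mono subsetD)

lemma joined_refl [simp]: "joined H S u u"
  unfolding joined_def by simp

lemma joined_trans: "joined H S u v \<Longrightarrow> joined H S v w \<Longrightarrow> joined H S u w"
  unfolding joined_def by (meson rtrancl_trans)

lemma joined_sym: "joined H S u v \<Longrightarrow> joined H S v u"
proof -
  have "(adj_rel H S)\<inverse> = adj_rel H S"
    unfolding adj_rel_def by auto
  then show "joined H S u v \<Longrightarrow> joined H S v u"
    unfolding joined_def by (metis rtrancl_converseI)
qed

lemma joined_edge: "g \<in> S \<Longrightarrow> ends H g = (c,d) \<Longrightarrow> joined H S c d"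
  unfolding joined_def adj_rel_def by (rule r_into_rtrancl) auto

lemma joined_edge_rev: "g \<in> S \<Longrightarrow> ends H g = (c,d) \<Longrightarrow> joined H S d c"
  using joined_edge joined_sym by metis

lemma joined_emptyD: "joined H {} u v \<Longrightarrow> u = v"
  unfolding joined_def adj_rel_def by (auto elim: rtranclE)

lemma joined_cong: "ends H = ends H' \<Longrightarrow> joined H S u v = joined H' S u v"
  unfolding joined_def adj_rel_def by simp

lemma joined_split_at_edge:
  assumes "joined H S x z" and "ends H g = (c,d)"
  shows "joined H (S-{g}) x z \<or> (joined H (S-{g}) x c \<and> joined H (S-{g}) d z)
         \<or> (joined H (S-{g}) x d \<and> joined H (S-{g}) c z)"
  using assms(1) unfolding joined_def[of H S]
proof (induction rule: rtrancl_induct)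
  case base then show ?case by simp
next
  case (step y z)
  from step.hyps(2) obtain h where h: "h \<in> S" "ends H h = (y,z) \<or> ends H h = (z,y)"
    unfolding adj_rel_def by auto
  show ?case
  proof (cases "h = g")
    case False
    then have "joined H (S-{g}) y z"
      using h joined_edge joined_edge_rev by (metis Diff_iff singletonD)
    then show ?thesis using step.IH joined_trans by metis
  next
    case True
    then have "(y,z) = (c,d) \<or> (y,z) = (d,c)" using h assms(2) by auto
    then show ?thesis using step.IH by auto
  qed
qed

lemma joined_via_edge:
  assumes "finite S" "joined H S x y" "x \<noteq> y"
  shows "\<exists>g\<in>S. (joined H (S-{g}) x (fst (ends H g)) \<and> joined H (S-{g}) (snd (ends H g)) y)
         \<or> (joined H (S-{g}) x (snd (ends H g)) \<and> joined H (S-{g}) (fst (ends H g)) y)"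
  using assms
proof (induction S rule: finite_psubset_induct)
  case (psubset S)
  show ?case
  proof (cases "\<exists>g\<in>S. joined H (S-{g}) x y")
    case True
    then obtain g where g: "g \<in> S" "joined H (S-{g}) x y" by auto
    have "S - {g} \<subset> S" using g by auto
    from psubset.IH[OF this g(2) psubset.prems(2)] obtain h where
      h: "h \<in> S - {g}" "(joined H (S - {g} - {h}) x (fst (ends H h)) \<and> joined H (S - {g} - {h}) (snd (ends H h)) y)
         \<or> (joined H (S - {g} - {h}) x (snd (ends H h)) \<and> joined H (S - {g} - {h}) (fst (ends H h)) y)"
      by blast
    have sub: "S - {g} - {h} \<subseteq> S - {h}" by auto
    show ?thesis using h joined_mono[OF _ sub] by (metis DiffD1)
  next
    case False
    have "S \<noteq> {}" using psubset.prems joined_emptyD by metis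
    then obtain g where g: "g \<in> S" by auto
    obtain c d where cd: "ends H g = (c,d)" by fastforce
    from joined_split_at_edge[OF psubset.prems(1) cd] False g
    show ?thesis using cd g by (metis fst_conv snd_conv)
  qed
qed

lemma edge_closes_cycle:
  assumes "finite S" "e \<notin> S" and nl: "fst (ends H e) \<noteq> snd (ends H e)"
    and J: "joined H S (fst (ends H e)) (snd (ends H e))"
  shows "\<exists>g\<in>S. joined H (insert e S - {g}) (fst (ends H g)) (snd (ends H g))"
proof -
  obtain g where g: "g \<in> S" and paths:
    "(joined H (S-{g}) (fst (ends H e)) (fst (ends H g)) \<and> joined H (S-{g}) (snd (ends H g)) (snd (ends H e)))
     \<or> (joined H (S-{g}) (fst (ends H e)) (snd (ends H g)) \<and> joined H (S-{g}) (fst (ends H g)) (snd (ends H e)))"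
    using joined_via_edge[OF assms(1) J nl] by blast
  let ?R = "insert e S - {g}"
  have lift: "joined H ?R u v" if "joined H (S-{g}) u v" for u v
    by (rule joined_mono[OF that]) blast
  have E: "joined H ?R (fst (ends H e)) (snd (ends H e))"
    using joined_edge[of e ?R H "fst (ends H e)" "snd (ends H e)"] g assms(2) by auto
  from paths have "joined H ?R (fst (ends H g)) (snd (ends H g))"
  proof
    assume "joined H (S-{g}) (fst (ends H e)) (fst (ends H g)) \<and> joined H (S-{g}) (snd (ends H g)) (snd (ends H e))"
    then have ac: "joined H ?R (fst (ends H e)) (fst (ends H g))"
      and db: "joined H ?R (snd (ends H g)) (snd (ends H e))"
      using lift by auto
    show ?thesis using joined_trans[OF joined_trans[OF joined_sym[OF ac] E] joined_sym[OF db]] .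
  next
    assume "joined H (S-{g}) (fst (ends H e)) (snd (ends H g)) \<and> joined H (S-{g}) (fst (ends H g)) (snd (ends H e))"
    then have ad: "joined H ?R (fst (ends H e)) (snd (ends H g))"
      and cb: "joined H ?R (fst (ends H g)) (snd (ends H e))"
      using lift by auto
    show ?thesis using joined_trans[OF joined_trans[OF cb joined_sym[OF E]] ad] .
  qed
  then show ?thesis using g by blast
qed

section \<open>Deletion and contraction\<close>

lemma delete_edge_simps:
  "verts (delete_edge H e) = verts H" "arcs (delete_edge H e) = arcs H - {e}"
  "ends (delete_edge H e) = ends H" "wt (delete_edge H e) = wt H"
  unfolding delete_edge_def by simp_all

lemma spanning_tree_delete_edge:
  "spanning_tree (delete_edge H e) T \<longleftrightarrow> spanning_tree H T \<and> e \<notin> T"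
  unfolding spanning_tree_def connected_by_def acyclic_edges_def delete_edge_def
  using joined_cong[of "H\<lparr>arcs := arcs H - {e}\<rparr>" H] by auto

lemma spanning_tree_no_loop:
  "spanning_tree H T \<Longrightarrow> g \<in> T \<Longrightarrow> fst (ends H g) \<noteq> snd (ends H g)"
  unfolding spanning_tree_def acyclic_edges_def by auto

lemma tree_sum_delete_loop:
  assumes "fst (ends H e) = snd (ends H e)"
  shows "tree_sum (delete_edge H e) = tree_sum H"
proof -
  have "{T. spanning_tree (delete_edge H e) T} = {T. spanning_tree H T}"
    using spanning_tree_delete_edge spanning_tree_no_loop assms by metis
  then show ?thesis unfolding tree_sum_def by (simp add: delete_edge_def)
qed

lemma tree_sum_update_wt:
  assumes "\<And>g. g \<in> arcs H \<Longrightarrow> w g = wt H g"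
  shows "tree_sum (H\<lparr>wt := w\<rparr>) = tree_sum H"
proof -
  have trees: "spanning_tree (H\<lparr>wt := w\<rparr>) = spanning_tree H"
    unfolding spanning_tree_def connected_by_def acyclic_edges_def
    using joined_cong[of "H\<lparr>wt := w\<rparr>" H] by (simp add: fun_eq_iff)
  show ?thesis
    unfolding tree_sum_def trees
    using assms by (intro sum.cong prod.cong) (auto simp: spanning_tree_def)
qed

lemma delete_edge_update_wt: "delete_edge (H\<lparr>wt := w\<rparr>) e = (delete_edge H e)\<lparr>wt := w\<rparr>"
  unfolding delete_edge_def by simp

lemma contract_edge_update_wt: "contract_edge (H\<lparr>wt := w\<rparr>) e = (contract_edge H e)\<lparr>wt := w\<rparr>"
  by (simp add: contract_edge_def Let_def cong del: if_weak_cong)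

definition contract_vertex :: "('v,'e) wgraph \<Rightarrow> 'e \<Rightarrow> 'v \<Rightarrow> 'v" where
  "contract_vertex H e v = (if v = snd (ends H e) then fst (ends H e) else v)"

lemma contract_edge_simps:
  "verts (contract_edge H e) = contract_vertex H e ` verts H"
  "arcs (contract_edge H e) = arcs H - {e}"
  "ends (contract_edge H e) = map_prod (contract_vertex H e) (contract_vertex H e) \<circ> ends H"
  "wt (contract_edge H e) = wt H"
  unfolding contract_edge_def contract_vertex_def Let_def by (simp_all add: fun_eq_iff)

lemma contract_vertex_eq_joined:
  assumes "contract_vertex H e p = contract_vertex H e q" "e \<in> S"
  shows "joined H S p q"
proof -
  have "joined H S (fst (ends H e)) (snd (ends H e))"
    using joined_edge[OF assms(2), of H] by simp
  then show ?thesis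
    using assms(1) joined_sym unfolding contract_vertex_def by (auto split: if_splits)
qed

lemma joined_contract:
  assumes "joined H S x y"
  shows "joined (contract_edge H e) (S - {e}) (contract_vertex H e x) (contract_vertex H e y)"
  using assms unfolding joined_def[of H]
proof (induction rule: rtrancl_induct)
  case base then show ?case by simp
next
  case (step y z)
  from step.hyps(2) obtain h where h: "h \<in> S" "ends H h = (y,z) \<or> ends H h = (z,y)"
    unfolding adj_rel_def by auto
  show ?case
  proof (cases "h = e")
    case True
    obtain a b where "ends H e = (a,b)" by fastforce
    then have "contract_vertex H e y = contract_vertex H e z"
      using h True unfolding contract_vertex_def by auto
    then show ?thesis using step.IH by simp
  next
    case False
    have "ends (contract_edge H e) h = (contract_vertex H e y, contract_vertex H e z) \<or>
          ends (contract_edge H e) h = (contract_vertex H e z, contract_vertex H e y)"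
      using h unfolding contract_edge_simps by auto
    then have "joined (contract_edge H e) (S - {e}) (contract_vertex H e y) (contract_vertex H e z)"
      using False h(1) joined_edge joined_edge_rev by (metis DiffI singletonD)
    then show ?thesis using step.IH joined_trans by metis
  qed
qed

lemma joined_uncontract:
  assumes "joined (contract_edge H e) S (contract_vertex H e x) (contract_vertex H e y)"
  shows "joined H (insert e S) x y"
proof -
  have "joined H (insert e S) x y"
    if "(u, w) \<in> (adj_rel (contract_edge H e) S)\<^sup>*" "u = contract_vertex H e x" "w = contract_vertex H e y"
    for u w x y
    using that
  proof (induction arbitrary: y rule: rtrancl_induct)
    case base
    then show ?case using contract_vertex_eq_joined[of H e x y "insert e S"] by simp
  next
    case (step w w')
    from step.hyps(2) obtain h where h: "h \<in> S"
      "ends (contract_edge H e) h = (w,w') \<or> ends (contract_edge H e) h = (w',w)"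
      unfolding adj_rel_def by auto
    obtain c d where cd: "ends H h = (c,d)" by fastforce
    have hS: "h \<in> insert e S" using h(1) by simp
    from h(2) cd consider
        "contract_vertex H e c = w" "contract_vertex H e d = w'"
      | "contract_vertex H e d = w" "contract_vertex H e c = w'"
      unfolding contract_edge_simps by auto
    then show ?case
    proof cases
      case 1
      have "joined H (insert e S) x c" using step.IH[OF step.prems(1) 1(1)[symmetric]] .
      moreover have "joined H (insert e S) c d" using joined_edge[OF hS cd] .
      moreover have "joined H (insert e S) d y"
        using contract_vertex_eq_joined[of H e d y] 1 step.prems by simp
      ultimately show ?thesis by (meson joined_trans)
    next
      case 2
      have "joined H (insert e S) x d" using step.IH[OF step.prems(1) 2(1)[symmetric]] .
      moreover have "joined H (insert e S) d c" using joined_edge_rev[OF hS cd] .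
      moreover have "joined H (insert e S) c y"
        using contract_vertex_eq_joined[of H e c y] 2 step.prems by simp
      ultimately show ?thesis by (meson joined_trans)
    qed
  qed
  then show ?thesis using assms unfolding joined_def by blast
qed

lemma joined_contract_iff:
  assumes "e \<in> T"
  shows "joined (contract_edge H e) (T - {e}) (contract_vertex H e x) (contract_vertex H e y)
     \<longleftrightarrow> joined H T x y"
  using joined_contract[of H T x y e] joined_uncontract[of H e "T - {e}" x y] assms
  by (metis insert_Diff)

lemma connected_by_contract_iff:
  assumes eT: "e \<in> T"
  shows "connected_by (contract_edge H e) (T - {e}) \<longleftrightarrow> connected_by H T"
proof
  assume C: "connected_by (contract_edge H e) (T - {e})"
  show "connected_by H T" unfolding connected_by_def
  proof (intro ballI)
    fix x y assume "x \<in> verts H" "y \<in> verts H"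
    then have "joined (contract_edge H e) (T - {e}) (contract_vertex H e x) (contract_vertex H e y)"
      using C unfolding connected_by_def contract_edge_simps by blast
    then show "joined H T x y" using joined_contract_iff[OF eT, of H x y] by simp
  qed
next
  assume "connected_by H T"
  then show "connected_by (contract_edge H e) (T - {e})"
    unfolding connected_by_def contract_edge_simps
    by (auto simp: joined_contract_iff[OF eT])
qed

lemma edge_acyclic_contract_iff:
  fixes H :: "('v,'e) wgraph"
  assumes "e \<in> T" "g \<in> T - {e}"
  defines "C \<equiv> contract_edge H e"
  shows "(fst (ends C g) \<noteq> snd (ends C g) \<and> \<not> joined C (T - {e} - {g}) (fst (ends C g)) (snd (ends C g)))
     \<longleftrightarrow> (fst (ends H g) \<noteq> snd (ends H g) \<and> \<not> joined H (T - {g}) (fst (ends H g)) (snd (ends H g)))"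
proof -
  obtain c d where cd: "ends H g = (c,d)" by fastforce
  have ends_C: "ends C g = (contract_vertex H e c, contract_vertex H e d)"
    using cd unfolding C_def by (simp add: contract_edge_simps)
  have eTg: "e \<in> T - {g}" using assms by auto
  have "T - {e} - {g} = (T - {g}) - {e}" by auto
  then have J: "joined C (T - {e} - {g}) (contract_vertex H e c) (contract_vertex H e d) \<longleftrightarrow> joined H (T - {g}) c d"
    using joined_contract_iff[OF eTg] unfolding C_def by simp
  have "contract_vertex H e c = contract_vertex H e d \<Longrightarrow> joined H (T - {g}) c d"
    using contract_vertex_eq_joined[OF _ eTg] .
  then show ?thesis unfolding ends_C cd fst_conv snd_conv J by auto
qed

lemma acyclic_edges_contract_iff:
  assumes fin: "finite T" and eT: "e \<in> T" and nl: "fst (ends H e) \<noteq> snd (ends H e)"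
  shows "acyclic_edges (contract_edge H e) (T - {e}) \<longleftrightarrow> acyclic_edges H T"
proof
  assume A: "acyclic_edges H T"
  show "acyclic_edges (contract_edge H e) (T - {e})"
    unfolding acyclic_edges_def
  proof
    fix g assume g: "g \<in> T - {e}"
    then show "fst (ends (contract_edge H e) g) \<noteq> snd (ends (contract_edge H e) g) \<and>
      \<not> joined (contract_edge H e) (T - {e} - {g}) (fst (ends (contract_edge H e) g)) (snd (ends (contract_edge H e) g))"
      using edge_acyclic_contract_iff[OF eT g] A unfolding acyclic_edges_def by blast
  qed
next
  assume A: "acyclic_edges (contract_edge H e) (T - {e})"
  have others: "fst (ends H g) \<noteq> snd (ends H g) \<and> \<not> joined H (T - {g}) (fst (ends H g)) (snd (ends H g))"
    if "g \<in> T - {e}" for g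
    using edge_acyclic_contract_iff[OF eT that] A that unfolding acyclic_edges_def by blast
  have "\<not> joined H (T - {e}) (fst (ends H e)) (snd (ends H e))"
  proof
    assume "joined H (T - {e}) (fst (ends H e)) (snd (ends H e))"
    from edge_closes_cycle[OF _ _ nl this] fin obtain g where
      "g \<in> T - {e}" "joined H (insert e (T - {e}) - {g}) (fst (ends H g)) (snd (ends H g))"
      by blast
    then show False using others eT by (simp add: insert_absorb)
  qed
  then show "acyclic_edges H T" unfolding acyclic_edges_def using others nl by blast
qed

lemma spanning_tree_contract_iff:
  assumes fin: "finite (arcs H)" and eA: "e \<in> arcs H"
    and nl: "fst (ends H e) \<noteq> snd (ends H e)" and eT: "e \<in> T"
  shows "spanning_tree (contract_edge H e) (T - {e}) \<longleftrightarrow> spanning_tree H T"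
proof (cases "T \<subseteq> arcs H")
  case True
  then have "finite T" using fin finite_subset by blast
  moreover have "T - {e} \<subseteq> arcs (contract_edge H e)" using True unfolding contract_edge_simps by blast
  ultimately show ?thesis
    unfolding spanning_tree_def connected_by_contract_iff[OF eT]
    using True acyclic_edges_contract_iff[OF _ eT nl] by simp
next
  case False
  then have "\<not> T - {e} \<subseteq> arcs (contract_edge H e)" using eA unfolding contract_edge_simps by blast
  then show ?thesis using False unfolding spanning_tree_def by blast
qed

lemma finite_spanning_trees: "finite (arcs H) \<Longrightarrow> finite {T. spanning_tree H T}"
  unfolding spanning_tree_def by (rule finite_subset[of _ "Pow (arcs H)"]) auto

lemma spanning_trees_containing_edge:
  assumes fin: "finite (arcs H)" and eA: "e \<in> arcs H"
    and nl: "fst (ends H e) \<noteq> snd (ends H e)"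
  shows "{T. spanning_tree H T \<and> e \<in> T} = insert e ` {S. spanning_tree (contract_edge H e) S}"
proof (rule subset_antisym; rule subsetI)
  fix T assume "T \<in> {T. spanning_tree H T \<and> e \<in> T}"
  then have "spanning_tree (contract_edge H e) (T - {e})" "T = insert e (T - {e})"
    using spanning_tree_contract_iff[OF fin eA nl] by auto
  then show "T \<in> insert e ` {S. spanning_tree (contract_edge H e) S}" by blast
next
  fix T assume "T \<in> insert e ` {S. spanning_tree (contract_edge H e) S}"
  then obtain S where S: "T = insert e S" "spanning_tree (contract_edge H e) S" by blast
  then have "e \<notin> S" unfolding spanning_tree_def contract_edge_simps by auto
  then show "T \<in> {T. spanning_tree H T \<and> e \<in> T}"
    using S spanning_tree_contract_iff[OF fin eA nl, of T] by simp
qed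

theorem tree_sum_delete_contract:
  assumes fin: "finite (arcs H)" and eA: "e \<in> arcs H"
    and nl: "fst (ends H e) \<noteq> snd (ends H e)"
  shows "tree_sum H = tree_sum (delete_edge H e) + wt H e * tree_sum (contract_edge H e)"
proof -
  let ?S = "{S. spanning_tree (contract_edge H e) S}"
  have fT: "finite {T. spanning_tree H T}" by (rule finite_spanning_trees[OF fin])
  have contract_trees: "S \<subseteq> arcs H - {e}" if "S \<in> ?S" for S
    using that unfolding spanning_tree_def contract_edge_simps by simp
  have inj: "inj_on (insert e) ?S"
    by (rule inj_onI) (metis contract_trees Diff_insert_absorb DiffD2 singletonI subsetD)
  have split: "{T. spanning_tree H T} = {T. spanning_tree H T \<and> e \<notin> T} \<union> {T. spanning_tree H T \<and> e \<in> T}"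
    by auto
  have "tree_sum H = (\<Sum>T\<in>{T. spanning_tree H T \<and> e \<notin> T}. prod (wt H) T)
                   + (\<Sum>T\<in>{T. spanning_tree H T \<and> e \<in> T}. prod (wt H) T)"
    unfolding tree_sum_def split
    by (rule sum.union_disjoint) (auto intro: finite_subset[OF _ fT])
  also have "(\<Sum>T\<in>{T. spanning_tree H T \<and> e \<notin> T}. prod (wt H) T) = tree_sum (delete_edge H e)"
    unfolding tree_sum_def spanning_tree_delete_edge by (simp add: delete_edge_def)
  also have "(\<Sum>T\<in>{T. spanning_tree H T \<and> e \<in> T}. prod (wt H) T) = (\<Sum>S\<in>?S. prod (wt H) (insert e S))"
    unfolding spanning_trees_containing_edge[OF fin eA nl] by (rule sum.reindex[OF inj, unfolded comp_def])
  also have "\<dots> = (\<Sum>S\<in>?S. wt H e * prod (wt H) S)"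
  proof (rule sum.cong[OF refl])
    fix S assume "S \<in> ?S"
    then have "finite S" "e \<notin> S" using contract_trees fin finite_subset by fastforce+
    then show "prod (wt H) (insert e S) = wt H e * prod (wt H) S" by simp
  qed
  also have "\<dots> = wt H e * tree_sum (contract_edge H e)"
    unfolding tree_sum_def contract_edge_simps sum_distrib_left by simp
  finally show ?thesis .
qed

corollary tree_sum_delete_contract_two:
  assumes fin: "finite (arcs H)" and arcs: "e \<in> arcs H" "f \<in> arcs H" "e \<noteq> f"
    and nl: "fst (ends H e) \<noteq> snd (ends H e)" "fst (ends H f) \<noteq> snd (ends H f)"
    and disj: "{fst (ends H e), snd (ends H e)} \<inter> {fst (ends H f), snd (ends H f)} = {}"
  shows "tree_sum H =
     tree_sum (delete_edge (delete_edge H e) f)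
     + wt H f * tree_sum (contract_edge (delete_edge H e) f)
     + wt H e * (tree_sum (delete_edge (contract_edge H e) f)
                 + wt H f * tree_sum (contract_edge (contract_edge H e) f))"
proof -
  have "ends (contract_edge H e) f = ends H f"
    using disj unfolding contract_edge_simps contract_vertex_def by (auto simp: map_prod_def split: prod.splits)
  then show ?thesis
    using tree_sum_delete_contract[OF fin arcs(1) nl(1)]
      tree_sum_delete_contract[of "delete_edge H e" f] tree_sum_delete_contract[of "contract_edge H e" f]
      fin arcs nl(2)
    by (simp add: delete_edge_def contract_edge_simps)
qed

section \<open>Principal minors\<close>

definition det_on :: "nat set \<Rightarrow> (nat \<Rightarrow> nat \<Rightarrow> real) \<Rightarrow> real" where
  "det_on V M = det (mat (card V) (card V)
      (\<lambda>(i,j). M (sorted_list_of_set V ! i) (sorted_list_of_set V ! j)))"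

lemma det_on_cong:
  assumes "finite V" "\<And>u v. u \<in> V \<Longrightarrow> v \<in> V \<Longrightarrow> M u v = M' u v"
  shows "det_on V M = det_on V M'"
proof -
  let ?xs = "sorted_list_of_set V"
  have "\<And>i. i < card V \<Longrightarrow> ?xs ! i \<in> V"
    using assms(1) by (metis length_sorted_list_of_set nth_mem set_sorted_list_of_set)
  then have "mat (card V) (card V) (\<lambda>(i,j). M (?xs ! i) (?xs ! j))
           = mat (card V) (card V) (\<lambda>(i,j). M' (?xs ! i) (?xs ! j))"
    using assms(2) by (intro eq_matI) auto
  then show ?thesis unfolding det_on_def by simp
qed

lemma det_on_empty: "det_on {} M = 1"
  unfolding det_on_def by simp

lemma det_on_zero: "finite V \<Longrightarrow> V \<noteq> {} \<Longrightarrow> det_on V (\<lambda>u v. 0) = 0"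
proof -
  assume "finite V" "V \<noteq> {}"
  then have "card V > 0" by (simp add: card_gt_0_iff)
  moreover have "mat (card V) (card V) (\<lambda>(i,j). (0::real)) = 0\<^sub>m (card V) (card V)"
    by (intro eq_matI) auto
  ultimately show ?thesis unfolding det_on_def by simp
qed

lemma det_on_lessThan: "det_on {..<n} M = det (mat n n (\<lambda>(i,j). M i j))"
proof -
  have "mat n n (\<lambda>(i,j). M ([0..<n] ! i) ([0..<n] ! j)) = mat n n (\<lambda>(i,j). M i j)"
    by (intro eq_matI) auto
  then show ?thesis unfolding det_on_def by (simp add: lessThan_atLeast0)
qed

lemma remove1_nth:
  "distinct xs \<Longrightarrow> k < length xs \<Longrightarrow> remove1 (xs ! k) xs = take k xs @ drop (Suc k) xs"
proof (induction xs arbitrary: k)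
  case Nil then show ?case by simp
next
  case (Cons x xs)
  show ?case
  proof (cases k)
    case 0 then show ?thesis by simp
  next
    case (Suc k')
    then have "xs ! k' \<noteq> x" using Cons.prems by (metis distinct.simps(2) nth_mem Suc_less_SucD length_Cons)
    then show ?thesis using Cons Suc by auto
  qed
qed

lemma sorted_list_of_set_remove_nth:
  assumes "finite V" "k < card V" "i < card V - 1"
  shows "sorted_list_of_set (V - {sorted_list_of_set V ! k}) ! i
       = sorted_list_of_set V ! (if i < k then i else Suc i)"
proof -
  let ?xs = "sorted_list_of_set V"
  have "sorted_list_of_set (V - {?xs ! k}) = take k ?xs @ drop (Suc k) ?xs"
    using sorted_list_of_set_remove[OF assms(1)] remove1_nth[of ?xs k] assms(2) by simp
  then show ?thesis using assms by (auto simp: nth_append min_def)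
qed

lemma det_on_add_diag:
  assumes fin: "finite V" and b: "b \<in> V"
  shows "det_on V (\<lambda>u v. M u v + (if u = b \<and> v = b then w else 0))
       = det_on V M + w * det_on (V - {b}) M"
proof -
  let ?xs = "sorted_list_of_set V"
  let ?n = "card V"
  obtain k where k: "k < ?n" "?xs ! k = b"
    using b fin by (metis in_set_conv_nth length_sorted_list_of_set set_sorted_list_of_set)
  have idx: "\<And>i. i < ?n \<Longrightarrow> ?xs ! i = b \<longleftrightarrow> i = k"
    using k by (metis distinct_sorted_list_of_set length_sorted_list_of_set nth_eq_iff_index_eq)
  define A where "A = mat ?n ?n (\<lambda>(i,j). M (?xs ! i) (?xs ! j))"
  define A' where "A' = mat ?n ?n (\<lambda>(i,j). M (?xs ! i) (?xs ! j) + (if ?xs ! i = b \<and> ?xs ! j = b then w else 0))"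
  have A: "A \<in> carrier_mat ?n ?n" "A' \<in> carrier_mat ?n ?n" unfolding A_def A'_def by auto
  have row_k: "A' $$ (k,j) = A $$ (k,j) + (if j = k then w else 0)"
    and cof: "cofactor A' k j = cofactor A k j" if "j < ?n" for j
  proof -
    show "A' $$ (k,j) = A $$ (k,j) + (if j = k then w else 0)"
      using that k unfolding A_def A'_def by (auto simp: idx)
    have "mat_delete A' k j = mat_delete A k j"
      unfolding mat_delete_def A_def A'_def by (intro eq_matI) (auto simp: idx)
    then show "cofactor A' k j = cofactor A k j" unfolding cofactor_def by simp
  qed
  have "det A' = (\<Sum>j<?n. A' $$ (k,j) * cofactor A' k j)"
    by (rule laplace_expansion_row[OF A(2) k(1)])
  also have "\<dots> = (\<Sum>j<?n. A $$ (k,j) * cofactor A k j + (if j = k then w * cofactor A k k else 0))"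
    by (intro sum.cong refl) (simp add: row_k cof algebra_simps)
  also have "\<dots> = det A + w * cofactor A k k"
    using laplace_expansion_row[OF A(1) k(1)] k(1) by (simp add: sum.distrib)
  also have "cofactor A k k = det (mat_delete A k k)" unfolding cofactor_def by simp
  also have "mat_delete A k k = mat (card (V - {b})) (card (V - {b}))
      (\<lambda>(i,j). M (sorted_list_of_set (V - {b}) ! i) (sorted_list_of_set (V - {b}) ! j))"
  proof -
    have c: "card (V - {b}) = ?n - 1" using b fin by simp
    show ?thesis unfolding mat_delete_def A_def c
      by (intro eq_matI) (auto simp: sorted_list_of_set_remove_nth[OF fin k(1), unfolded k(2)])
  qed
  finally show ?thesis unfolding det_on_def A_def A'_def by simp
qed

text \<open>The effect on a matrix of adding row b to row a and then column b to column a.\<close>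
definition add_row_col :: "nat \<Rightarrow> nat \<Rightarrow> (nat \<Rightarrow> nat \<Rightarrow> real) \<Rightarrow> nat \<Rightarrow> nat \<Rightarrow> real" where
  "add_row_col a b M u v = M u v + (if u = a then M b v else 0) + (if v = a then M u b else 0)
     + (if u = a \<and> v = a then M b b else 0)"

lemma det_on_add_row_col:
  assumes fin: "finite V" and a: "a \<in> V" and b: "b \<in> V" and ab: "a \<noteq> b"
  shows "det_on V (add_row_col a b M) = det_on V M"
proof -
  let ?xs = "sorted_list_of_set V"
  let ?n = "card V"
  obtain ka where ka: "ka < ?n" "?xs ! ka = a"
    using a fin by (metis in_set_conv_nth length_sorted_list_of_set set_sorted_list_of_set)
  obtain kb where kb: "kb < ?n" "?xs ! kb = b"
    using b fin by (metis in_set_conv_nth length_sorted_list_of_set set_sorted_list_of_set)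
  have idxa: "\<And>i. i < ?n \<Longrightarrow> ?xs ! i = a \<longleftrightarrow> i = ka"
    using ka by (metis distinct_sorted_list_of_set length_sorted_list_of_set nth_eq_iff_index_eq)
  have kab: "ka \<noteq> kb" using ka kb ab by auto
  define A where "A = mat ?n ?n (\<lambda>(i,j). M (?xs ! i) (?xs ! j))"
  have A: "A \<in> carrier_mat ?n ?n" unfolding A_def by auto
  have A1: "addrow 1 ka kb A \<in> carrier_mat ?n ?n" using A by simp
  have "det (addcol 1 ka kb (addrow 1 ka kb A)) = det A"
    using det_addcol[OF kb(1) kab A1] det_addrow[OF kb(1) kab A] by simp
  moreover have "addcol 1 ka kb (addrow 1 ka kb A)
     = mat ?n ?n (\<lambda>(i,j). add_row_col a b M (?xs ! i) (?xs ! j))"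
    unfolding A_def add_row_col_def mat_addcol_def mat_addrow_def
    by (intro eq_matI) (auto simp: idxa kb ka)
  ultimately show ?thesis unfolding det_on_def A_def by simp
qed

lemma add_row_col_outer:
  "add_row_col a b (\<lambda>u v. x u * x v) u v
     = (x u + (if u = a then x b else 0)) * (x v + (if v = a then x b else 0))"
  unfolding add_row_col_def by (simp add: algebra_simps)

lemma add_row_col_linear:
  "add_row_col a b (\<lambda>u v. \<Sum>g\<in>S. c g * M g u v) u v = (\<Sum>g\<in>S. c g * add_row_col a b (M g) u v)"
  unfolding add_row_col_def by (simp add: sum.distrib sum_distrib_left algebra_simps)

section \<open>Laplacians and the matrix-tree theorem\<close>

definition incidence :: "nat \<times> nat \<Rightarrow> nat \<Rightarrow> real" where
  "incidence cd u = (if u = fst cd then 1 else 0) - (if u = snd cd then 1 else 0)"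

text \<open>The usual (positive semidefinite) Laplacian; loops have zero incidence vector and
  contribute nothing.\<close>
definition laplacian :: "(nat,'e) wgraph \<Rightarrow> nat \<Rightarrow> nat \<Rightarrow> real" where
  "laplacian H u v = (\<Sum>g\<in>arcs H. wt H g * (incidence (ends H g) u * incidence (ends H g) v))"

definition wf_graph :: "(nat,'e) wgraph \<Rightarrow> bool" where
  "wf_graph H \<longleftrightarrow> finite (verts H) \<and> finite (arcs H) \<and>
     (\<forall>g\<in>arcs H. fst (ends H g) \<in> verts H \<and> snd (ends H g) \<in> verts H)"

lemma wf_graph_delete_edge: "wf_graph H \<Longrightarrow> wf_graph (delete_edge H e)"
  unfolding wf_graph_def delete_edge_def by auto

lemma wf_graph_contract_edge: "wf_graph H \<Longrightarrow> wf_graph (contract_edge H e)"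
  unfolding wf_graph_def contract_edge_simps by auto

lemma verts_contract_edge:
  assumes "wf_graph H" "e \<in> arcs H" "ends H e = (a,b)" "a \<noteq> b"
  shows "verts (contract_edge H e) = verts H - {b}"
proof -
  have "a \<in> verts H" using assms unfolding wf_graph_def by force
  then show ?thesis unfolding contract_edge_simps contract_vertex_def using assms(3,4) by force
qed

lemma laplacian_sym: "laplacian H u v = laplacian H v u"
  unfolding laplacian_def by (simp add: mult.commute)

lemma laplacian_delete_edge:
  assumes "finite (arcs H)" "e \<in> arcs H"
  shows "laplacian H u v = laplacian (delete_edge H e) u v
           + wt H e * (incidence (ends H e) u * incidence (ends H e) v)"
  unfolding laplacian_def delete_edge_def using sum.remove[OF assms] by (simp add: add.commute)

lemma incidence_contract:
  assumes "a \<noteq> b" "u \<noteq> b"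
  shows "incidence (if c = b then a else c, if d = b then a else d) u
       = incidence (c,d) u + (if u = a then incidence (c,d) b else 0)"
  using assms unfolding incidence_def by auto

lemma laplacian_contract_edge:
  assumes ab: "ends H e = (a,b)" "a \<noteq> b" and uv: "u \<noteq> b" "v \<noteq> b"
  shows "laplacian (contract_edge H e) u v = add_row_col a b (laplacian (delete_edge H e)) u v"
proof -
  have "incidence (ends (contract_edge H e) g) w
      = incidence (ends H g) w + (if w = a then incidence (ends H g) b else 0)" if w: "w \<noteq> b" for g w
  proof -
    obtain c d where cd: "ends H g = (c,d)" by fastforce
    then have "ends (contract_edge H e) g = (if c = b then a else c, if d = b then a else d)"
      using ab unfolding contract_edge_simps contract_vertex_def by simp
    then show ?thesis using incidence_contract[OF ab(2) w, of c d] cd by simp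
  qed
  then show ?thesis
    unfolding laplacian_def add_row_col_linear add_row_col_outer
    using uv by (simp add: delete_edge_simps contract_edge_simps cong del: if_weak_cong)
qed

lemma det_on_laplacian_delete_contract:
  assumes wf: "wf_graph H" and eA: "e \<in> arcs H" and ab: "ends H e = (a,b)" "a \<noteq> b"
    and r: "r \<in> verts H"
  defines "r' \<equiv> if r = b then a else r"
  shows "det_on (verts H - {r}) (laplacian H)
       = det_on (verts H - {r}) (laplacian (delete_edge H e))
         + wt H e * det_on (verts (contract_edge H e) - {r'}) (laplacian (contract_edge H e))"
proof -
  let ?L = "laplacian (delete_edge H e)" and ?W = "verts H - {r}"
  have fin: "finite (arcs H)" and finV: "finite (verts H)" using wf unfolding wf_graph_def by auto
  then have finW: "finite ?W" by simp
  have abV: "a \<in> verts H" "b \<in> verts H" using wf eA ab unfolding wf_graph_def by force+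
  have vC: "verts (contract_edge H e) = verts H - {b}" by (rule verts_contract_edge[OF wf eA ab])
  have lH: "laplacian H u v = ?L u v + wt H e * (incidence (a,b) u * incidence (a,b) v)" for u v
    using laplacian_delete_edge[OF fin eA] ab by simp
  have lC: "laplacian (contract_edge H e) u v = add_row_col a b ?L u v" if "u \<noteq> b" "v \<noteq> b" for u v
    using laplacian_contract_edge[OF ab that] .
  show ?thesis
  proof (cases "r = a \<or> r = b")
    case True
    define c where "c = (if r = a then b else a)"
    have cW: "c \<in> ?W" and W: "?W - {c} = verts (contract_edge H e) - {r'}"
      using True abV ab(2) vC unfolding c_def r'_def by auto
    have "det_on ?W (laplacian H) = det_on ?W (\<lambda>u v. ?L u v + (if u = c \<and> v = c then wt H e else 0))"
      using True ab(2) by (intro det_on_cong[OF finW]) (auto simp: lH c_def incidence_def)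
    also have "\<dots> = det_on ?W ?L + wt H e * det_on (?W - {c}) ?L"
      by (rule det_on_add_diag[OF finW cW])
    also have "det_on (?W - {c}) ?L = det_on (?W - {c}) (laplacian (contract_edge H e))"
      using True by (intro det_on_cong) (auto simp: finV lC add_row_col_def c_def)
    finally show ?thesis unfolding W .
  next
    case False
    have aW: "a \<in> ?W" and bW: "b \<in> ?W" and W: "verts (contract_edge H e) - {r'} = ?W - {b}"
      using abV False vC unfolding r'_def by auto
    have "det_on ?W (laplacian H) = det_on ?W (add_row_col a b (laplacian H))"
      by (rule det_on_add_row_col[OF finW aW bW ab(2), symmetric])
    also have "\<dots> = det_on ?W (\<lambda>u v. add_row_col a b ?L u v + (if u = b \<and> v = b then wt H e else 0))"
      using ab(2) by (intro det_on_cong[OF finW]) (auto simp: add_row_col_def lH incidence_def)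
    also have "\<dots> = det_on ?W (add_row_col a b ?L) + wt H e * det_on (?W - {b}) (add_row_col a b ?L)"
      by (rule det_on_add_diag[OF finW bW])
    also have "det_on ?W (add_row_col a b ?L) = det_on ?W ?L"
      by (rule det_on_add_row_col[OF finW aW bW ab(2)])
    also have "det_on (?W - {b}) (add_row_col a b ?L) = det_on (?W - {b}) (laplacian (contract_edge H e))"
      by (intro det_on_cong) (auto simp: finV lC)
    finally show ?thesis unfolding W .
  qed
qed

lemma matrix_tree_no_arcs:
  assumes wf: "wf_graph H" and r: "r \<in> verts H" and no_arcs: "arcs H = {}"
  shows "tree_sum H = det_on (verts H - {r}) (laplacian H)"
proof -
  have lz: "laplacian H = (\<lambda>u v. 0)" unfolding laplacian_def no_arcs by (simp add: fun_eq_iff)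
  have sub: "{T. spanning_tree H T} \<subseteq> {{}}" unfolding spanning_tree_def no_arcs by auto
  show ?thesis
  proof (cases "verts H - {r} = {}")
    case True
    then have "u = v" if "u \<in> verts H" "v \<in> verts H" for u v
      using that by blast
    then have "spanning_tree H {}"
      unfolding spanning_tree_def connected_by_def acyclic_edges_def
      by (metis empty_iff empty_subsetI joined_refl)
    then have "{T. spanning_tree H T} = {{}}" using sub by auto
    then show ?thesis unfolding tree_sum_def True det_on_empty by simp
  next
    case False
    then obtain u where u: "u \<in> verts H" "u \<noteq> r" by auto
    then have "\<not> spanning_tree H {}" unfolding spanning_tree_def connected_by_def
      using r joined_emptyD by metis
    then have "{T. spanning_tree H T} = {}" using sub by auto
    then have "tree_sum H = 0" unfolding tree_sum_def by (metis sum.empty)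
    then show ?thesis
      unfolding lz using det_on_zero[OF _ False] wf by (simp add: wf_graph_def)
  qed
qed

theorem matrix_tree:
  "wf_graph H \<Longrightarrow> r \<in> verts H \<Longrightarrow> tree_sum H = det_on (verts H - {r}) (laplacian H)"
proof (induction "card (arcs H)" arbitrary: H r rule: less_induct)
  case less
  have fin: "finite (arcs H)" using less.prems unfolding wf_graph_def by auto
  show ?case
  proof (cases "arcs H = {}")
    case True
    then show ?thesis using matrix_tree_no_arcs less.prems by blast
  next
    case False
    then obtain e where eA: "e \<in> arcs H" by auto
    obtain a b where ab: "ends H e = (a,b)" by fastforce
    have smaller: "card (arcs (delete_edge H e)) < card (arcs H)"
        "card (arcs (contract_edge H e)) < card (arcs H)"
      using card_Diff1_less[OF fin eA] by (simp_all add: delete_edge_def contract_edge_simps)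
    have IHD: "tree_sum (delete_edge H e) = det_on (verts H - {r}) (laplacian (delete_edge H e))"
      using less.hyps[OF smaller(1) wf_graph_delete_edge[OF less.prems(1)]] less.prems(2)
      by (simp add: delete_edge_def)
    show ?thesis
    proof (cases "a = b")
      case True
      have "laplacian H = laplacian (delete_edge H e)"
        using laplacian_delete_edge[OF fin eA] ab True by (simp add: fun_eq_iff incidence_def)
      then show ?thesis using IHD tree_sum_delete_loop[of H e] ab True by simp
    next
      case False
      define r' where "r' = (if r = b then a else r)"
      have "r' \<in> verts (contract_edge H e)"
        using less.prems verts_contract_edge[OF less.prems(1) eA ab False] eA ab False
        unfolding r'_def wf_graph_def by force
      then have IHC: "tree_sum (contract_edge H e) = det_on (verts (contract_edge H e) - {r'}) (laplacian (contract_edge H e))"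
        using less.hyps[OF smaller(2) wf_graph_contract_edge[OF less.prems(1)]] by blast
      show ?thesis
        using tree_sum_delete_contract[OF fin eA] det_on_laplacian_delete_contract[OF less.prems(1) eA ab False less.prems(2)]
          IHD IHC ab False unfolding r'_def by simp
    qed
  qed
qed

section \<open>Quadratic forms of symmetric matrices\<close>

text \<open>Vectors are represented by functions on indices below n.\<close>
definition bilin :: "nat \<Rightarrow> real mat \<Rightarrow> (nat \<Rightarrow> real) \<Rightarrow> (nat \<Rightarrow> real) \<Rightarrow> real" where
  "bilin n M x y = (\<Sum>i<n. \<Sum>j<n. x i * y j * M $$ (i,j))"

definition sumsq :: "nat \<Rightarrow> (nat \<Rightarrow> real) \<Rightarrow> real" where
  "sumsq n x = (\<Sum>i<n. (x i)^2)"

definition sym_mat :: "nat \<Rightarrow> real mat \<Rightarrow> bool" where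
  "sym_mat n M \<longleftrightarrow> (\<forall>i<n. \<forall>j<n. M $$ (i,j) = M $$ (j,i))"

lemma sumsq_nonneg: "sumsq n x \<ge> 0"
  unfolding sumsq_def by (intro sum_nonneg) auto

lemma sq_le_sumsq: "i < n \<Longrightarrow> (x i)^2 \<le> sumsq n x"
  unfolding sumsq_def by (rule member_le_sum) auto

lemma abs_mult_le_sumsq:
  assumes "i < n" "j < n"
  shows "\<bar>x i * x j\<bar> \<le> sumsq n x"
proof -
  have "\<bar>x i * x j\<bar> \<le> ((x i)^2 + (x j)^2) / 2"
    using sum_squares_bound[of "\<bar>x i\<bar>" "\<bar>x j\<bar>"] by (simp add: abs_mult)
  also have "\<dots> \<le> sumsq n x" using sq_le_sumsq[OF assms(1), of x] sq_le_sumsq[OF assms(2), of x] by simp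
  finally show ?thesis .
qed

lemma bilin_sym: "sym_mat n M \<Longrightarrow> bilin n M x y = bilin n M y x"
  unfolding bilin_def sym_mat_def
  by (subst sum.swap) (simp add: algebra_simps)

lemma bilin_add_scaled:
  "bilin n M (\<lambda>i. x i + l * y i) (\<lambda>i. x i + l * y i)
    = bilin n M x x + l * (bilin n M x y + bilin n M y x) + l^2 * bilin n M y y"
  unfolding bilin_def by (simp add: algebra_simps sum.distrib sum_distrib_left power2_eq_square)

lemma bilin_abs_bound: "bilin n A y y \<le> (\<Sum>i<n. \<Sum>j<n. \<bar>A $$ (i,j)\<bar>) * sumsq n y"
proof -
  have "bilin n A y y \<le> (\<Sum>i<n. \<Sum>j<n. \<bar>A $$ (i,j)\<bar> * sumsq n y)"
    unfolding bilin_def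
  proof (intro sum_mono)
    fix i j assume "i \<in> {..<n}" "j \<in> {..<n}"
    then have "\<bar>y i * y j\<bar> * \<bar>A $$ (i,j)\<bar> \<le> sumsq n y * \<bar>A $$ (i,j)\<bar>"
      using abs_mult_le_sumsq[of i n j y] by (intro mult_right_mono) auto
    then show "y i * y j * A $$ (i,j) \<le> \<bar>A $$ (i,j)\<bar> * sumsq n y"
      by (metis abs_ge_self abs_mult mult.commute order_trans)
  qed
  also have "\<dots> = (\<Sum>i<n. \<Sum>j<n. \<bar>A $$ (i,j)\<bar>) * sumsq n y" unfolding sum_distrib_right ..
  finally show ?thesis .
qed

lemma bilin_cauchy_schwarz:
  assumes sy: "sym_mat n M" and psd: "\<And>z. bilin n M z z \<ge> 0"
  shows "(bilin n M x y)^2 \<le> bilin n M x x * bilin n M y y"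
proof -
  define p q s where "p = bilin n M x x" and "q = bilin n M x y" and "s = bilin n M y y"
  have key: "p + 2 * l * q + l^2 * s \<ge> 0" for l
    using psd[of "\<lambda>i. x i + l * y i"] unfolding bilin_add_scaled p_def q_def s_def bilin_sym[OF sy, of y x]
    by simp
  have s0: "s \<ge> 0" unfolding s_def by (rule psd)
  show ?thesis
  proof (cases "s = 0")
    case True
    have "q = 0"
    proof (rule ccontr)
      assume "q \<noteq> 0"
      then show False using key[of "-(p+1)/(2*q)"] True by (simp add: field_simps)
    qed
    then show ?thesis using True unfolding q_def s_def by simp
  next
    case False
    then have "s > 0" using s0 by simp
    then have "q^2 \<le> p * s" using key[of "-q/s"] by (simp add: field_simps power2_eq_square)
    then show ?thesis unfolding p_def q_def s_def .
  qed
qed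

lemma bilin_right_inverse:
  fixes x :: "nat \<Rightarrow> real"
  assumes M: "M \<in> carrier_mat n n" and B: "B \<in> carrier_mat n n" and MB: "M * B = 1\<^sub>m n"
  defines "y \<equiv> \<lambda>j. \<Sum>l<n. B $$ (j,l) * x l"
  shows "bilin n M x y = sumsq n x"
    and "bilin n M y y \<le> (\<Sum>j<n. \<Sum>l<n. \<bar>B $$ (j,l)\<bar>) * sumsq n x"
proof -
  have MBe: "(\<Sum>j<n. M $$ (i,j) * B $$ (j,l)) = (if i = l then 1 else 0)" if "i < n" "l < n" for i l
  proof -
    have "(M * B) $$ (i,l) = (\<Sum>j<n. M $$ (i,j) * B $$ (j,l))"
      using M B that by (simp add: scalar_prod_def lessThan_atLeast0)
    then show ?thesis using MB that by simp
  qed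
  have My: "(\<Sum>j<n. M $$ (i,j) * y j) = x i" if i: "i < n" for i
  proof -
    have "(\<Sum>j<n. M $$ (i,j) * y j) = (\<Sum>l<n. (\<Sum>j<n. M $$ (i,j) * B $$ (j,l)) * x l)"
      unfolding y_def sum_distrib_left sum_distrib_right
      by (subst sum.swap) (simp add: algebra_simps)
    also have "\<dots> = x i" using i by (simp add: MBe if_distrib[of "\<lambda>c. c * _"] cong: if_cong)
    finally show ?thesis .
  qed
  have "bilin n M x y = (\<Sum>i<n. x i * (\<Sum>j<n. M $$ (i,j) * y j))"
    unfolding bilin_def by (simp add: sum_distrib_left algebra_simps)
  also have "\<dots> = sumsq n x" unfolding sumsq_def by (intro sum.cong refl) (simp add: My power2_eq_square)
  finally show "bilin n M x y = sumsq n x" .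
  have "bilin n M y y = (\<Sum>i<n. y i * (\<Sum>j<n. M $$ (i,j) * y j))"
    unfolding bilin_def by (simp add: sum_distrib_left algebra_simps)
  also have "\<dots> = (\<Sum>i<n. y i * x i)" by (intro sum.cong refl) (simp add: My)
  also have "\<dots> = (\<Sum>i<n. \<Sum>l<n. x i * x l * B $$ (i,l))"
    unfolding y_def sum_distrib_right by (intro sum.cong refl) (simp add: algebra_simps)
  also have "\<dots> = bilin n B x x" unfolding bilin_def ..
  also have "\<dots> \<le> (\<Sum>j<n. \<Sum>l<n. \<bar>B $$ (j,l)\<bar>) * sumsq n x" by (rule bilin_abs_bound)
  finally show "bilin n M y y \<le> (\<Sum>j<n. \<Sum>l<n. \<bar>B $$ (j,l)\<bar>) * sumsq n x" .
qed

lemma psd_nonsingular_coercive: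
  assumes M: "M \<in> carrier_mat n n" and sy: "sym_mat n M" and psd: "\<And>z. bilin n M z z \<ge> 0"
    and d: "det M \<noteq> 0"
  shows "\<exists>c>0. \<forall>x. bilin n M x x \<ge> c * sumsq n x"
proof -
  from det_non_zero_imp_unit[OF M d] obtain B where B: "B \<in> carrier_mat n n" and MB: "M * B = 1\<^sub>m n"
    unfolding Units_def ring_mat_def by auto
  define K where "K = (\<Sum>j<n. \<Sum>l<n. \<bar>B $$ (j,l)\<bar>)"
  have K0: "K \<ge> 0" unfolding K_def by (intro sum_nonneg) auto
  show ?thesis
  proof (intro exI[of _ "1/(K+1)"] conjI allI)
    show "1/(K+1) > 0" using K0 by simp
    fix x
    define y where "y j = (\<Sum>l<n. B $$ (j,l) * x l)" for j
    have "(sumsq n x)^2 \<le> bilin n M x x * bilin n M y y"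
      using bilin_cauchy_schwarz[OF sy psd, of x y] bilin_right_inverse(1)[OF M B MB] unfolding y_def by simp
    also have "\<dots> \<le> bilin n M x x * (K * sumsq n x)"
      using bilin_right_inverse(2)[OF M B MB] psd[of x] unfolding y_def K_def by (intro mult_left_mono) auto
    finally have cs: "sumsq n x * sumsq n x \<le> (K * bilin n M x x) * sumsq n x"
      by (simp add: power2_eq_square algebra_simps)
    show "bilin n M x x \<ge> 1/(K+1) * sumsq n x"
    proof (cases "sumsq n x = 0")
      case True then show ?thesis using psd[of x] by simp
    next
      case False
      then have "sumsq n x > 0" using sumsq_nonneg[of n x] by simp
      then have "sumsq n x \<le> K * bilin n M x x" using cs by simp
      also have "\<dots> \<le> (K + 1) * bilin n M x x" using psd[of x] by (simp add: algebra_simps)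
      finally show ?thesis using K0 by (simp add: field_simps)
    qed
  qed
qed

lemma sumsq_pos_vec:
  assumes v: "v \<in> carrier_vec n" "v \<noteq> 0\<^sub>v n"
  shows "sumsq n (\<lambda>i. v $ i) > 0"
proof -
  obtain i where i: "i < n" "v $ i \<noteq> 0" using v by (metis carrier_vecD eq_vecI index_zero_vec(1) index_zero_vec(2))
  have "0 < (v $ i)^2" using i by simp
  also have "\<dots> \<le> sumsq n (\<lambda>i. v $ i)" using sq_le_sumsq[OF i(1)] .
  finally show ?thesis .
qed

lemma bilin_eigenvector:
  assumes A: "A \<in> carrier_mat n n" and v: "v \<in> carrier_vec n" and Av: "A *\<^sub>v v = k \<cdot>\<^sub>v v"
  shows "bilin n A (\<lambda>i. v $ i) (\<lambda>i. v $ i) = k * sumsq n (\<lambda>i. v $ i)"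
proof -
  have row: "(\<Sum>j<n. A $$ (i,j) * v $ j) = k * v $ i" if "i < n" for i
  proof -
    have "(A *\<^sub>v v) $ i = (\<Sum>j<n. A $$ (i,j) * v $ j)"
      using A v that by (simp add: scalar_prod_def lessThan_atLeast0)
    then show ?thesis using Av v that by simp
  qed
  have "bilin n A (\<lambda>i. v $ i) (\<lambda>i. v $ i) = (\<Sum>i<n. v $ i * (\<Sum>j<n. A $$ (i,j) * v $ j))"
    unfolding bilin_def by (simp add: sum_distrib_left algebra_simps)
  also have "\<dots> = (\<Sum>i<n. k * (v $ i)^2)" by (intro sum.cong refl) (simp add: row power2_eq_square)
  also have "\<dots> = k * sumsq n (\<lambda>i. v $ i)" unfolding sumsq_def sum_distrib_left ..
  finally show ?thesis .
qed

lemma eigenvalue_nonpos_if_nsd: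
  assumes A: "A \<in> carrier_mat n n" and nsd: "\<And>x. bilin n A x x \<le> 0"
    and ev: "eigenvalue A k"
  shows "k \<le> 0"
proof -
  from ev obtain v where v: "v \<in> carrier_vec n" "v \<noteq> 0\<^sub>v n" "A *\<^sub>v v = k \<cdot>\<^sub>v v"
    unfolding eigenvalue_def eigenvector_def using A by auto
  have "k * sumsq n (\<lambda>i. v $ i) \<le> 0"
    using bilin_eigenvector[OF A v(1,3)] nsd by metis
  then show ?thesis using sumsq_pos_vec[OF v(1,2)] by (simp add: mult_le_0_iff)
qed

lemma neg_char_matrix_index:
  assumes A: "A \<in> carrier_mat n n" and ij: "i < n" "j < n"
  shows "(- char_matrix A m) $$ (i,j) = (if i = j then m else 0) - A $$ (i,j)"
  using A ij unfolding char_matrix_def by auto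

lemma bilin_neg_char_matrix:
  assumes A: "A \<in> carrier_mat n n"
  shows "bilin n (- char_matrix A m) y y = m * sumsq n y - bilin n A y y"
proof -
  have "bilin n (- char_matrix A m) y y
      = (\<Sum>i<n. \<Sum>j<n. (if i = j then m * (y i * y j) else 0) - y i * y j * A $$ (i,j))"
    unfolding bilin_def by (intro sum.cong refl) (auto simp: neg_char_matrix_index[OF A] algebra_simps)
  also have "\<dots> = (\<Sum>i<n. m * (y i)^2) - bilin n A y y"
    unfolding bilin_def sum_subtractf by (simp add: power2_eq_square)
  finally show ?thesis unfolding sumsq_def sum_distrib_left .
qed

lemma sym_mat_neg_char_matrix:
  assumes "A \<in> carrier_mat n n" "sym_mat n A"
  shows "sym_mat n (- char_matrix A m)"
  using assms unfolding sym_mat_def by (auto simp: neg_char_matrix_index[OF assms(1)])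

text \<open>The least m \<ge> 0 bounding the quadratic form of A by m times the squared norm exists;
  when it is positive it will turn out to be the largest eigenvalue of A.\<close>
lemma least_rayleigh_bound:
  fixes A :: "real mat" and n :: nat
  defines "U \<equiv> {m. m \<ge> 0 \<and> (\<forall>y. bilin n A y y \<le> m * sumsq n y)}"
  shows "Inf U \<in> U" and "\<And>m. m \<in> U \<Longrightarrow> Inf U \<le> m"
proof -
  define C where "C = (\<Sum>i<n. \<Sum>j<n. \<bar>A $$ (i,j)\<bar>)"
  have CU: "C \<in> U" unfolding U_def C_def using bilin_abs_bound by (auto intro!: sum_nonneg)
  have bdd: "bdd_below U" unfolding U_def by (rule bdd_belowI[of _ 0]) auto
  show lower: "Inf U \<le> m" if "m \<in> U" for m using bdd that by (simp add: cInf_lower)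
  have m0ge: "Inf U \<ge> 0" using CU by (intro cInf_greatest) (auto simp: U_def)
  have "bilin n A y y \<le> Inf U * sumsq n y" for y
  proof (rule ccontr)
    assume "\<not> ?thesis"
    then have gap: "bilin n A y y > Inf U * sumsq n y" by simp
    have np: "sumsq n y > 0"
    proof (rule ccontr)
      assume "\<not> sumsq n y > 0"
      then have "sumsq n y = 0" using sumsq_nonneg[of n y] by simp
      moreover have "bilin n A y y \<le> C * sumsq n y" using CU unfolding U_def by blast
      ultimately show False using gap by simp
    qed
    define d where "d = (bilin n A y y - Inf U * sumsq n y) / sumsq n y"
    have "d > 0" unfolding d_def using gap np by simp
    then obtain m where m: "m \<in> U" "m < Inf U + d" using cInf_lessD[of U "Inf U + d"] CU by auto
    have "bilin n A y y \<le> m * sumsq n y" using m(1) unfolding U_def by auto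
    also have "\<dots> < (Inf U + d) * sumsq n y" using m(2) np by simp
    also have "\<dots> = bilin n A y y" unfolding d_def using np by (simp add: field_simps)
    finally show False by simp
  qed
  then show "Inf U \<in> U" using m0ge unfolding U_def by auto
qed

lemma pos_eigenvalue_if_not_nsd:
  assumes A: "A \<in> carrier_mat n n" and sy: "sym_mat n A" and x: "bilin n A x x > 0"
  shows "\<exists>k>0. eigenvalue A k"
proof -
  define U where "U = {m. m \<ge> 0 \<and> (\<forall>y. bilin n A y y \<le> m * sumsq n y)}"
  define m0 where "m0 = Inf U"
  have m0U: "m0 \<in> U" and m0le: "\<And>m. m \<in> U \<Longrightarrow> m0 \<le> m"
    using least_rayleigh_bound[where A = A and n = n] unfolding U_def m0_def by blast+
  have m0pos: "m0 > 0"
  proof (rule ccontr)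
    assume "\<not> m0 > 0"
    then have "m0 = 0" using m0U unfolding U_def by simp
    then have "bilin n A x x \<le> 0 * sumsq n x" using m0U unfolding U_def by blast
    then show False using x by simp
  qed
  have cmc: "char_matrix A m0 \<in> carrier_mat n n" using A unfolding char_matrix_def by auto
  have "det (char_matrix A m0) = 0"
  proof (rule ccontr)
    assume "det (char_matrix A m0) \<noteq> 0"
    then have d: "det (- char_matrix A m0) \<noteq> 0" using det_0_negate[OF cmc] by simp
    have psd: "\<And>z. bilin n (- char_matrix A m0) z z \<ge> 0"
      using m0U unfolding U_def bilin_neg_char_matrix[OF A] by auto
    obtain c where c: "c > 0" "\<And>y. bilin n (- char_matrix A m0) y y \<ge> c * sumsq n y"
      using psd_nonsingular_coercive[OF _ sym_mat_neg_char_matrix[OF A sy] psd d] cmc by auto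
    have "bilin n A y y \<le> max 0 (m0 - c) * sumsq n y" for y
    proof -
      have "bilin n A y y \<le> (m0 - c) * sumsq n y"
        using c(2)[of y] unfolding bilin_neg_char_matrix[OF A] by (simp add: algebra_simps)
      also have "\<dots> \<le> max 0 (m0 - c) * sumsq n y" using sumsq_nonneg[of n y] by (intro mult_right_mono) auto
      finally show ?thesis .
    qed
    then have "m0 \<le> max 0 (m0 - c)" using m0le unfolding U_def by auto
    then show False using c(1) m0pos by simp
  qed
  then have "eigenvalue A m0"
    using det_0_iff_vec_prod_zero_field[OF cmc] eigenvalue_char_matrix[OF A] by simp
  then show ?thesis using m0pos by blast
qed

lemma n_plus_eq_0_iff:
  assumes A: "A \<in> carrier_mat n n"
  shows "n_plus A = 0 \<longleftrightarrow> (\<forall>k>0. \<not> eigenvalue A k)"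
proof -
  let ?p = "char_poly A"
  have p0: "?p \<noteq> 0" using degree_monic_char_poly[OF A] by auto
  let ?Z = "{x. x > 0 \<and> poly ?p x = 0}"
  have finZ: "finite ?Z" using poly_roots_finite[OF p0] by (rule finite_subset[rotated]) auto
  have ord: "\<And>x. x \<in> ?Z \<Longrightarrow> order x ?p \<noteq> 0" using p0 order_root by blast
  have "n_plus A = 0 \<longleftrightarrow> ?Z = {}"
    unfolding n_plus_def using sum_eq_0_iff[OF finZ] ord by (metis (no_types, lifting) ex_in_conv)
  also have "\<dots> \<longleftrightarrow> (\<forall>k>0. \<not> eigenvalue A k)"
    using eigenvalue_root_char_poly[OF A] by auto
  finally show ?thesis .
qed

theorem n_plus_eq_0_iff_nsd:
  assumes A: "A \<in> carrier_mat n n" and sy: "sym_mat n A"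
  shows "n_plus A = 0 \<longleftrightarrow> (\<forall>x. bilin n A x x \<le> 0)"
  using n_plus_eq_0_iff[OF A] pos_eigenvalue_if_not_nsd[OF A sy] eigenvalue_nonpos_if_nsd[OF A]
  by (meson not_le)

section \<open>The Laplacian of a signed graph\<close>

lemma double_sum_sym_eq_twice_upper:
  fixes h :: "nat \<Rightarrow> nat \<Rightarrow> real"
  assumes sym: "\<And>u v. h u v = h v u" and diag: "\<And>u. h u u = 0"
  shows "(\<Sum>u<N. \<Sum>v<N. h u v) = 2 * (\<Sum>u<N. \<Sum>v<N. if u < v then h u v else 0)"
proof -
  have split: "h u v = (if u < v then h u v else 0) + (if v < u then h u v else 0)" for u v
    using diag[of u] by (cases u v rule: linorder_cases) auto
  have "(\<Sum>u<N. \<Sum>v<N. h u v)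
      = (\<Sum>u<N. \<Sum>v<N. (if u < v then h u v else 0) + (if v < u then h u v else 0))"
    by (intro sum.cong refl) (rule split)
  also have "\<dots> = (\<Sum>u<N. \<Sum>v<N. if u < v then h u v else 0) + (\<Sum>u<N. \<Sum>v<N. if v < u then h u v else 0)"
    by (simp only: sum.distrib)
  also have "(\<Sum>u<N. \<Sum>v<N. if v < u then h u v else 0) = (\<Sum>v<N. \<Sum>u<N. if v < u then h v u else 0)"
    by (subst sum.swap, intro sum.cong refl) (metis sym)
  finally show ?thesis by simp
qed

locale sgraph =
  fixes N :: nat and gam :: "nat \<Rightarrow> nat \<Rightarrow> real"
  assumes signed: "signed_graph N gam"
begin

lemma gam_sym: "gam i j = gam j i"
  using signed unfolding signed_graph_def by auto

lemma gam_diag: "gam i i = 0"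
  using signed unfolding signed_graph_def by auto

abbreviation "edges \<equiv> sg_edges N gam"
abbreviation "pedges \<equiv> pos_edges N gam"
abbreviation "nedges \<equiv> neg_edges N gam"

lemma edges_subset: "edges \<subseteq> {..<N} \<times> {..<N}"
  unfolding sg_edges_def by auto

lemma finite_edges: "finite edges"
  using edges_subset finite_subset by blast

lemma edgeD: "p \<in> edges \<Longrightarrow> fst p < snd p \<and> snd p < N \<and> gam (fst p) (snd p) \<noteq> 0"
  unfolding sg_edges_def by auto

lemma nedge_less: "p \<in> nedges \<Longrightarrow> fst p < N \<and> snd p < N"
  unfolding neg_edges_def using edgeD by fastforce

lemma edges_pos_neg: "edges = pedges \<union> nedges" "pedges \<inter> nedges = {}"
  unfolding pos_edges_def neg_edges_def sg_edges_def by auto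

lemma finite_pedges: "finite pedges" and finite_nedges: "finite nedges"
  using finite_edges unfolding edges_pos_neg(1) by simp_all

lemma sum_edges_eq_upper_sum:
  fixes h :: "nat \<Rightarrow> nat \<Rightarrow> real"
  assumes "\<And>u v. gam u v = 0 \<Longrightarrow> h u v = 0"
  shows "(\<Sum>p\<in>edges. h (fst p) (snd p)) = (\<Sum>u<N. \<Sum>v<N. if u < v then h u v else 0)"
proof -
  have "(\<Sum>p\<in>edges. h (fst p) (snd p)) = (\<Sum>p\<in>{..<N} \<times> {..<N}. if fst p < snd p then h (fst p) (snd p) else 0)"
  proof (rule sum.mono_neutral_cong_left)
    show "\<forall>p\<in>{..<N} \<times> {..<N} - edges. (if fst p < snd p then h (fst p) (snd p) else 0) = 0"
      using assms unfolding sg_edges_def by auto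
  qed (use edges_subset edgeD in auto)
  then show ?thesis by (simp add: sum.cartesian_product case_prod_beta')
qed

definition energy :: "real \<Rightarrow> (nat \<Rightarrow> real) \<Rightarrow> real" where
  "energy t x = (\<Sum>p\<in>edges. wt_t gam t (fst p) (snd p) * (x (fst p) - x (snd p))^2)"

definition pos_energy :: "(nat \<Rightarrow> real) \<Rightarrow> real" where
  "pos_energy x = (\<Sum>p\<in>pedges. gam (fst p) (snd p) * (x (fst p) - x (snd p))^2)"

definition neg_energy :: "(nat \<Rightarrow> real) \<Rightarrow> real" where
  "neg_energy x = (\<Sum>p\<in>nedges. - gam (fst p) (snd p) * (x (fst p) - x (snd p))^2)"

lemma energy_eq: "energy t x = pos_energy x - t * neg_energy x"
proof -
  have "energy t x = (\<Sum>p\<in>pedges. wt_t gam t (fst p) (snd p) * (x (fst p) - x (snd p))^2)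
              + (\<Sum>p\<in>nedges. wt_t gam t (fst p) (snd p) * (x (fst p) - x (snd p))^2)"
    unfolding energy_def edges_pos_neg(1)
    by (rule sum.union_disjoint[OF finite_pedges finite_nedges edges_pos_neg(2)])
  also have "(\<Sum>p\<in>pedges. wt_t gam t (fst p) (snd p) * (x (fst p) - x (snd p))^2) = pos_energy x"
    unfolding pos_energy_def by (rule sum.cong[OF refl]) (auto simp: wt_t_def pos_edges_def)
  also have "(\<Sum>p\<in>nedges. wt_t gam t (fst p) (snd p) * (x (fst p) - x (snd p))^2) = - t * neg_energy x"
    unfolding neg_energy_def sum_distrib_left by (rule sum.cong[OF refl]) (auto simp: wt_t_def neg_edges_def)
  finally show ?thesis by simp
qed

lemma pos_energy_nonneg: "pos_energy x \<ge> 0"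
  unfolding pos_energy_def by (intro sum_nonneg) (auto simp: pos_edges_def)

lemma neg_energy_nonneg: "neg_energy x \<ge> 0"
  unfolding neg_energy_def by (intro sum_nonneg) (auto simp: neg_edges_def mult_nonpos_nonneg)

lemma energy_cong: "(\<And>i. i < N \<Longrightarrow> x i = x' i) \<Longrightarrow> energy t x = energy t x'"
  unfolding energy_def by (intro sum.cong refl) (auto dest: edgeD)

lemma neg_energy_cong: "(\<And>i. i < N \<Longrightarrow> x i = x' i) \<Longrightarrow> neg_energy x = neg_energy x'"
  unfolding neg_energy_def by (intro sum.cong refl) (auto dest!: nedge_less)

lemma energy_shift: "energy t (\<lambda>i. x i - c) = energy t x"
  unfolding energy_def by simp

lemma neg_energy_shift: "neg_energy (\<lambda>i. x i - c) = neg_energy x"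
  unfolding neg_energy_def by simp

lemma neg_energy_le_sumsq:
  "neg_energy x \<le> 4 * (\<Sum>p\<in>nedges. - gam (fst p) (snd p)) * sumsq N x"
proof -
  have "neg_energy x \<le> (\<Sum>p\<in>nedges. - gam (fst p) (snd p) * (4 * sumsq N x))"
    unfolding neg_energy_def
  proof (rule sum_mono)
    fix p assume p: "p \<in> nedges"
    have g: "- gam (fst p) (snd p) \<ge> 0" using p unfolding neg_edges_def by auto
    have "fst p < N" "snd p < N" using nedge_less[OF p] by auto
    then have "(x (fst p) - x (snd p))^2 \<le> 4 * sumsq N x"
      using sq_le_sumsq[of "fst p" N x] sq_le_sumsq[of "snd p" N x] sum_squares_bound[of "x (fst p)" "- x (snd p)"]
      by (simp add: power2_eq_square algebra_simps)
    then show "- gam (fst p) (snd p) * (x (fst p) - x (snd p))^2 \<le> - gam (fst p) (snd p) * (4 * sumsq N x)"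
      using g by (intro mult_left_mono) auto
  qed
  also have "\<dots> = 4 * (\<Sum>p\<in>nedges. - gam (fst p) (snd p)) * sumsq N x"
    unfolding sum_distrib_right sum_distrib_left by (rule sum.cong[OF refl]) (simp add: algebra_simps)
  finally show ?thesis .
qed

lemma neg_energy_indicator:
  assumes p: "p \<in> nedges"
  shows "neg_energy (\<lambda>i. if i = fst p then 1 else 0) \<ge> - gam (fst p) (snd p)"
proof -
  let ?x = "\<lambda>i. if i = fst p then 1 else (0::real)"
  have "fst p \<noteq> snd p" using p unfolding neg_edges_def using edgeD by fastforce
  moreover have "- gam (fst p) (snd p) * (?x (fst p) - ?x (snd p))^2 \<le> neg_energy ?x"
    unfolding neg_energy_def
    by (rule member_le_sum[OF p _ finite_nedges]) (auto simp: neg_edges_def mult_nonpos_nonneg)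
  ultimately show ?thesis by simp
qed

abbreviation "lap_t t \<equiv> laplacian_t N gam t"

lemma lap_t_carrier: "lap_t t \<in> carrier_mat N N"
  unfolding laplacian_t_def by simp

lemma lap_t_sym: "sym_mat N (lap_t t)"
  unfolding sym_mat_def laplacian_t_def wt_t_def using gam_sym by simp

text \<open>laplacian_t is the negative of the usual Laplacian, so its quadratic form is minus the energy.\<close>
lemma bilin_lap_t: "bilin N (lap_t t) x x = - energy t x"
proof -
  let ?W = "wt_t gam t"
  have W_sym: "?W u v = ?W v u" for u v unfolding wt_t_def using gam_sym by simp
  have entry: "lap_t t $$ (u,v) = ?W u v - (if u = v then (\<Sum>k<N. ?W u k) else 0)"
    if "u < N" "v < N" for u v
    using that gam_diag unfolding laplacian_t_def wt_t_def by simp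
  have row: "(\<Sum>v<N. x u * x v * lap_t t $$ (u,v)) = (\<Sum>v<N. x u * x v * ?W u v) - (\<Sum>v<N. ?W u v * (x u)^2)"
    if u: "u < N" for u
  proof -
    have "(\<Sum>v<N. x u * x v * lap_t t $$ (u,v))
        = (\<Sum>v<N. x u * x v * ?W u v - (if u = v then x u * x u * (\<Sum>k<N. ?W u k) else 0))"
      using u by (intro sum.cong refl) (auto simp: entry algebra_simps)
    then show ?thesis using u by (simp add: sum_subtractf sum_distrib_left power2_eq_square algebra_simps)
  qed
  have "bilin N (lap_t t) x x = (\<Sum>u<N. \<Sum>v<N. x u * x v * ?W u v) - (\<Sum>u<N. \<Sum>v<N. ?W u v * (x u)^2)"
    unfolding bilin_def by (simp add: row sum_subtractf)
  also have "\<dots> = - ((1/2) * (\<Sum>u<N. \<Sum>v<N. ?W u v * (x u - x v)^2))"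
  proof -
    have "(\<Sum>u<N. \<Sum>v<N. ?W u v * (x v)^2) = (\<Sum>u<N. \<Sum>v<N. ?W u v * (x u)^2)"
      by (subst sum.swap) (simp add: W_sym)
    moreover have "(\<Sum>u<N. \<Sum>v<N. ?W u v * (x u - x v)^2)
        = (\<Sum>u<N. \<Sum>v<N. ?W u v * (x u)^2) + (\<Sum>u<N. \<Sum>v<N. ?W u v * (x v)^2)
          - 2 * (\<Sum>u<N. \<Sum>v<N. x u * x v * ?W u v)"
      by (simp add: power2_diff sum.distrib sum_subtractf sum_distrib_left algebra_simps)
    ultimately show ?thesis by (simp add: field_simps)
  qed
  also have "(1/2) * (\<Sum>u<N. \<Sum>v<N. ?W u v * (x u - x v)^2)
      = (\<Sum>u<N. \<Sum>v<N. if u < v then ?W u v * (x u - x v)^2 else 0)"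
    using double_sum_sym_eq_twice_upper[of "\<lambda>u v. ?W u v * (x u - x v)^2" N]
    by (simp add: W_sym power2_commute)
  also have "\<dots> = energy t x"
    unfolding energy_def by (rule sum_edges_eq_upper_sum[symmetric]) (simp add: wt_t_def)
  finally show ?thesis .
qed

lemma n_plus_lap_t_eq_0_iff: "n_plus (lap_t t) = 0 \<longleftrightarrow> (\<forall>x. energy t x \<ge> 0)"
  unfolding n_plus_eq_0_iff_nsd[OF lap_t_carrier lap_t_sym] bilin_lap_t by simp

end

section \<open>The reduced Laplacian and the threshold t*\<close>

lemma sum_mult_incidence:
  "finite I \<Longrightarrow> (\<Sum>u\<in>I. y u * incidence cd u)
     = (if fst cd \<in> I then y (fst cd) else 0) - (if snd cd \<in> I then y (snd cd) else 0)"
  unfolding incidence_def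
  by (simp add: right_diff_distrib sum_subtractf if_distrib[of "\<lambda>x. y _ * x"] sum.delta' cong: if_cong)

lemma bilin_laplacian:
  assumes "finite (arcs H)"
  shows "bilin n (mat n n (\<lambda>(i,j). laplacian H i j)) y y =
     (\<Sum>g\<in>arcs H. wt H g * ((if fst (ends H g) < n then y (fst (ends H g)) else 0)
                             - (if snd (ends H g) < n then y (snd (ends H g)) else 0))^2)"
proof -
  let ?c = "\<lambda>g. \<Sum>i<n. y i * incidence (ends H g) i"
  have "bilin n (mat n n (\<lambda>(i,j). laplacian H i j)) y y = (\<Sum>i<n. \<Sum>j<n. y i * y j * laplacian H i j)"
    unfolding bilin_def by (intro sum.cong refl) simp
  also have "\<dots> = (\<Sum>i<n. \<Sum>j<n. \<Sum>g\<in>arcs H. wt H g * (y i * incidence (ends H g) i) * (y j * incidence (ends H g) j))"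
    unfolding laplacian_def sum_distrib_left by (simp add: algebra_simps)
  also have "\<dots> = (\<Sum>g\<in>arcs H. \<Sum>i<n. \<Sum>j<n. wt H g * (y i * incidence (ends H g) i) * (y j * incidence (ends H g) j))"
    by (simp only: sum.swap[of _ "arcs H"])
  also have "\<dots> = (\<Sum>g\<in>arcs H. wt H g * (?c g * ?c g))"
    by (intro sum.cong refl) (simp add: sum_distrib_left sum_distrib_right algebra_simps)
  finally show ?thesis by (simp add: sum_mult_incidence power2_eq_square)
qed

context sgraph
begin

abbreviation "graph_t t \<equiv> sg_graph_t N gam t"

lemma graph_t_simps:
  "verts (graph_t t) = {..<N}" "arcs (graph_t t) = edges" "ends (graph_t t) = id"
  "wt (graph_t t) = (\<lambda>(i,j). wt_t gam t i j)"
  unfolding sg_graph_t_def sg_graph_def by simp_all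

lemma wf_graph_t: "wf_graph (graph_t t)"
  unfolding wf_graph_def graph_t_simps using finite_edges edges_subset by auto

definition reduced_laplacian :: "real \<Rightarrow> real mat" where
  "reduced_laplacian t = mat (N - 1) (N - 1) (\<lambda>(i,j). laplacian (graph_t t) i j)"

lemma reduced_laplacian_carrier: "reduced_laplacian t \<in> carrier_mat (N - 1) (N - 1)"
  unfolding reduced_laplacian_def by simp

lemma reduced_laplacian_sym: "sym_mat (N - 1) (reduced_laplacian t)"
  unfolding sym_mat_def reduced_laplacian_def by (auto intro: laplacian_sym)

lemma tree_sum_eq_det_reduced_laplacian:
  assumes "0 < N"
  shows "tree_sum (graph_t t) = det (reduced_laplacian t)"
proof -
  have "N - 1 \<in> verts (graph_t t)" "verts (graph_t t) - {N - 1} = {..<N - 1}"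
    using assms unfolding graph_t_simps by auto
  then have "tree_sum (graph_t t) = det_on {..<N - 1} (laplacian (graph_t t))"
    using matrix_tree[OF wf_graph_t] by simp
  then show ?thesis unfolding det_on_lessThan reduced_laplacian_def .
qed

definition zero_ext :: "(nat \<Rightarrow> real) \<Rightarrow> nat \<Rightarrow> real" where
  "zero_ext y i = (if i < N - 1 then y i else 0)"

lemma bilin_reduced_laplacian: "bilin (N - 1) (reduced_laplacian t) y y = energy t (zero_ext y)"
  unfolding reduced_laplacian_def bilin_laplacian[OF finite_edges[folded graph_t_simps(2)[of t]]]
  unfolding graph_t_simps energy_def zero_ext_def id_def by (simp add: case_prod_beta')

lemma sumsq_zero_ext:
  assumes "0 < N"
  shows "sumsq N (zero_ext y) = sumsq (N - 1) y"
proof -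
  have "{..<N} = insert (N - 1) {..<N - 1}" using assms by auto
  then show ?thesis unfolding sumsq_def zero_ext_def by simp
qed

lemma singular_reduced_laplacian:
  assumes "det (reduced_laplacian t) = 0"
  shows "\<exists>z. energy t z = 0 \<and> z (N - 1) = 0 \<and> (\<exists>i<N. z i \<noteq> 0)"
proof -
  from assms det_0_iff_vec_prod_zero_field[OF reduced_laplacian_carrier] obtain v where
    v: "v \<in> carrier_vec (N - 1)" "v \<noteq> 0\<^sub>v (N - 1)" "reduced_laplacian t *\<^sub>v v = 0\<^sub>v (N - 1)" by blast
  have "sumsq (N - 1) (\<lambda>i. v $ i) > 0" by (rule sumsq_pos_vec[OF v(1,2)])
  then obtain i where i: "i < N - 1" "v $ i \<noteq> 0" unfolding sumsq_def
    by (metis (no_types, lifting) lessThan_iff less_irrefl power_zero_numeral sum.neutral)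
  have "bilin (N - 1) (reduced_laplacian t) (\<lambda>i. v $ i) (\<lambda>i. v $ i) = 0 * sumsq (N - 1) (\<lambda>i. v $ i)"
    by (rule bilin_eigenvector[OF reduced_laplacian_carrier v(1)]) (use v(1,3) in \<open>auto intro!: eq_vecI\<close>)
  then have "energy t (zero_ext (\<lambda>i. v $ i)) = 0" unfolding bilin_reduced_laplacian by simp
  moreover have "zero_ext (\<lambda>i. v $ i) (N - 1) = 0" "zero_ext (\<lambda>i. v $ i) i \<noteq> 0" "i < N"
    using i unfolding zero_ext_def by auto
  ultimately show ?thesis by blast
qed

text \<open>Energy is invariant under adding constants, so it suffices to bound it on vectors vanishing
  at the root; there a nonsingular reduced Laplacian is coercive and absorbs the bounded negative part.\<close>
lemma energy_nonneg_beyond: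
  assumes N: "0 < N" and psd: "\<forall>x. energy t x \<ge> 0" and d: "det (reduced_laplacian t) \<noteq> 0"
  shows "\<exists>d>0. \<forall>x. energy (t + d) x \<ge> 0"
proof -
  have psd': "\<And>y. bilin (N - 1) (reduced_laplacian t) y y \<ge> 0"
    unfolding bilin_reduced_laplacian using psd by simp
  obtain c where c: "c > 0" "\<And>y. bilin (N - 1) (reduced_laplacian t) y y \<ge> c * sumsq (N - 1) y"
    using psd_nonsingular_coercive[OF reduced_laplacian_carrier reduced_laplacian_sym psd' d] by blast
  define K where "K = 4 * (\<Sum>p\<in>nedges. - gam (fst p) (snd p))"
  have K0: "K \<ge> 0" unfolding K_def by (auto intro!: sum_nonneg simp: neg_edges_def)
  define d where "d = c / (K + 1)"
  have dpos: "d > 0" and dK: "d * K \<le> c" unfolding d_def using c(1) K0 by (simp_all add: field_simps)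
  show ?thesis
  proof (intro exI[of _ d] conjI allI)
    show "d > 0" by (rule dpos)
    fix x :: "nat \<Rightarrow> real"
    define z where "z i = x i - x (N - 1)" for i
    have ez: "zero_ext z i = z i" if "i < N" for i
    proof (cases "i < N - 1")
      case False
      then have "i = N - 1" using that by linarith
      then show ?thesis unfolding zero_ext_def z_def by simp
    qed (simp add: zero_ext_def)
    have "energy t x = energy t (zero_ext z)"
      using energy_shift[of t x "x (N - 1)"] energy_cong[of "zero_ext z" z t] ez unfolding z_def by simp
    then have "energy t x \<ge> c * sumsq (N - 1) z"
      using c(2)[of z] unfolding bilin_reduced_laplacian by simp
    moreover have "neg_energy x = neg_energy (zero_ext z)"
      using neg_energy_shift[of x "x (N - 1)"] neg_energy_cong[of "zero_ext z" z] ez unfolding z_def by simp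
    then have "neg_energy x \<le> K * sumsq (N - 1) z"
      using neg_energy_le_sumsq[of "zero_ext z"] sumsq_zero_ext[OF N] unfolding K_def by simp
    ultimately have "energy t x - d * neg_energy x \<ge> (c - d * K) * sumsq (N - 1) z"
      using dpos by (smt (verit) mult_left_mono mult.assoc left_diff_distrib)
    moreover have "(c - d * K) * sumsq (N - 1) z \<ge> 0" using dK sumsq_nonneg[of "N - 1" z] by simp
    ultimately show "energy (t + d) x \<ge> 0" unfolding energy_eq by (simp add: algebra_simps)
  qed
qed

end

locale pos_connected_sgraph = sgraph +
  assumes pos_connected: "connected_by (sg_graph N gam) (pos_edges N gam)"
    and neg_nonempty: "neg_edges N gam \<noteq> {}"
begin

lemma N_ge_2: "2 \<le> N"
  using neg_nonempty edgeD unfolding neg_edges_def by fastforce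

lemma pos_energy_eq_0:
  assumes "pos_energy x = 0" "i < N"
  shows "x i = x (N - 1)"
proof -
  have const: "x (fst p) = x (snd p)" if p: "p \<in> pedges" for p
  proof -
    have "\<forall>p\<in>pedges. gam (fst p) (snd p) * (x (fst p) - x (snd p))^2 = 0"
      using assms(1) unfolding pos_energy_def
      by (subst sum_nonneg_eq_0_iff[OF finite_pedges, symmetric]) (auto simp: pos_edges_def)
    then have "gam (fst p) (snd p) * (x (fst p) - x (snd p))^2 = 0" using p by blast
    moreover have "gam (fst p) (snd p) > 0" using p unfolding pos_edges_def by auto
    ultimately show ?thesis by simp
  qed
  have "x u = x v" if "(u,v) \<in> (adj_rel (sg_graph N gam) pedges)\<^sup>*" for u v
    using that
  proof (induction rule: rtrancl_induct)
    case (step y z)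
    then obtain g where "g \<in> pedges" "g = (y,z) \<or> g = (z,y)"
      unfolding adj_rel_def sg_graph_def by auto
    then show ?case using const step.IH by force
  qed simp
  moreover have "joined (sg_graph N gam) pedges i (N - 1)"
    using pos_connected assms(2) N_ge_2 unfolding connected_by_def sg_graph_def by auto
  ultimately show ?thesis unfolding joined_def by blast
qed

abbreviation "stable_set \<equiv> {t. t \<ge> 0 \<and> n_plus (lap_t t) = 0}"
abbreviation "tstar \<equiv> t_star N gam"

lemma stable_set_eq: "stable_set = {t. t \<ge> 0 \<and> (\<forall>x. t * neg_energy x \<le> pos_energy x)}"
  unfolding n_plus_lap_t_eq_0_iff energy_eq by simp

lemma bdd_above_stable_set: "bdd_above stable_set"
proof -
  obtain p where p: "p \<in> nedges" using neg_nonempty by blast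
  let ?x = "\<lambda>i. if i = fst p then 1 else (0::real)"
  have "neg_energy ?x > 0"
    using neg_energy_indicator[OF p] p unfolding neg_edges_def by auto
  then show ?thesis
    unfolding stable_set_eq by (intro bdd_aboveI[of _ "pos_energy ?x / neg_energy ?x"]) (auto simp: field_simps)
qed

lemma zero_in_stable_set: "0 \<in> stable_set"
  unfolding stable_set_eq using pos_energy_nonneg by simp

lemma le_tstar: "t \<in> stable_set \<Longrightarrow> t \<le> tstar"
  unfolding t_star_def by (rule cSup_upper[OF _ bdd_above_stable_set])

lemma tstar_nonneg: "0 \<le> tstar"
  using le_tstar zero_in_stable_set .

lemma below_tstar_neg_energy_le:
  assumes "0 \<le> t" "t \<le> tstar"
  shows "t * neg_energy x \<le> pos_energy x"
proof (cases "neg_energy x = 0")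
  case True then show ?thesis using pos_energy_nonneg by simp
next
  case False
  then have pos: "neg_energy x > 0" using neg_energy_nonneg[of x] by simp
  have "tstar * neg_energy x \<le> pos_energy x"
  proof (rule ccontr)
    assume "\<not> ?thesis"
    then have "pos_energy x / neg_energy x < tstar" using pos by (simp add: field_simps)
    then obtain s where s: "s \<in> stable_set" "pos_energy x / neg_energy x < s"
      unfolding t_star_def using less_cSupD[of stable_set] zero_in_stable_set by blast
    then have "s * neg_energy x \<le> pos_energy x" unfolding stable_set_eq by blast
    then show False using s(2) pos by (simp add: field_simps)
  qed
  then show ?thesis using assms pos by (meson mult_right_mono order_trans less_imp_le)
qed

text \<open>Below t*, a kernel vector of the reduced Laplacian would have zero positive energy, hence be
  constant, hence vanish because it vanishes at the root.\<close>
lemma det_reduced_laplacian_nonzero: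
  assumes "0 \<le> t" "t < tstar \<or> t = 0"
  shows "det (reduced_laplacian t) \<noteq> 0"
proof
  assume "det (reduced_laplacian t) = 0"
  then obtain z i where z: "energy t z = 0" "z (N - 1) = 0" "i < N" "z i \<noteq> 0"
    using singular_reduced_laplacian by blast
  then have E: "pos_energy z = t * neg_energy z" using energy_eq by simp
  have "pos_energy z = 0"
    using assms(2)
  proof
    assume "t < tstar"
    then have "tstar * neg_energy z \<le> t * neg_energy z"
      using below_tstar_neg_energy_le[OF tstar_nonneg order_refl, of z] E by simp
    then have "neg_energy z = 0"
      using \<open>t < tstar\<close> neg_energy_nonneg[of z] by (smt (verit) mult_strict_right_mono)
    then show "pos_energy z = 0" using E by simp
  qed (use E in simp)
  then show False using pos_energy_eq_0[of z i] z by simp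
qed

lemma tstar_pos: "0 < tstar"
proof -
  have "\<forall>x. energy 0 x \<ge> 0" using energy_eq pos_energy_nonneg by simp
  then obtain d where "d > 0" "\<forall>x. energy d x \<ge> 0"
    using energy_nonneg_beyond det_reduced_laplacian_nonzero[of 0] N_ge_2 by force
  then have "d \<in> stable_set" unfolding stable_set_eq energy_eq by simp
  then show ?thesis using le_tstar \<open>d > 0\<close> by fastforce
qed

lemma det_reduced_laplacian_tstar: "det (reduced_laplacian tstar) = 0"
proof (rule ccontr)
  assume "det (reduced_laplacian tstar) \<noteq> 0"
  moreover have "\<forall>x. energy tstar x \<ge> 0"
    using below_tstar_neg_energy_le[OF tstar_nonneg order_refl] energy_eq by simp
  ultimately obtain d where "d > 0" "\<forall>x. energy (tstar + d) x \<ge> 0"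
    using energy_nonneg_beyond N_ge_2 by force
  then have "tstar + d \<in> stable_set" using tstar_nonneg unfolding stable_set_eq energy_eq by simp
  then show False using le_tstar \<open>d > 0\<close> by fastforce
qed

theorem tstar_least_positive_root:
  shows "bdd_above stable_set" and "0 < tstar" and "tree_sum (graph_t tstar) = 0"
    and "\<And>s. 0 < s \<Longrightarrow> tree_sum (graph_t s) = 0 \<Longrightarrow> tstar \<le> s"
proof -
  have det: "tree_sum (graph_t t) = det (reduced_laplacian t)" for t
    using tree_sum_eq_det_reduced_laplacian N_ge_2 by simp
  show "bdd_above stable_set" by (rule bdd_above_stable_set)
  show "0 < tstar" by (rule tstar_pos)
  show "tree_sum (graph_t tstar) = 0" unfolding det by (rule det_reduced_laplacian_tstar)
  show "tstar \<le> s" if "0 < s" "tree_sum (graph_t s) = 0" for s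
    using det_reduced_laplacian_nonzero[of s] that unfolding det by force
qed

end

section \<open>Two negative edges\<close>

context sgraph
begin

lemma tree_sum_two_neg_edges:
  assumes neg: "nedges = {e, f}" and ef: "e \<noteq> f"
    and disj: "{fst e, snd e} \<inter> {fst f, snd f} = {}"
  defines "G \<equiv> sg_graph N gam"
  shows "tree_sum (graph_t t) =
     tree_sum (delete_edge (delete_edge G e) f)
     + t * gam (fst f) (snd f) * tree_sum (contract_edge (delete_edge G e) f)
     + t * gam (fst e) (snd e) * (tree_sum (delete_edge (contract_edge G e) f)
         + t * gam (fst f) (snd f) * tree_sum (contract_edge (contract_edge G e) f))"
proof -
  define w where "w = (\<lambda>(i,j). wt_t gam t i j)"
  have graph_t: "graph_t t = G\<lparr>wt := w\<rparr>" unfolding sg_graph_t_def G_def w_def ..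
  have G: "arcs G = edges" "wt G = (\<lambda>(i,j). gam i j)" unfolding G_def sg_graph_def by simp_all
  have ef_in_edges: "e \<in> edges" "f \<in> edges" using neg edges_pos_neg(1) by auto
  have wt_neg: "wt (graph_t t) p = t * gam (fst p) (snd p)" if "p \<in> nedges" for p
    using that unfolding graph_t_simps wt_t_def neg_edges_def by (auto simp: case_prod_beta)
  have pedges_eq: "edges - {e} - {f} = pedges" using neg edges_pos_neg by auto
  have w_pos: "w p = wt G p" if "p \<in> pedges" for p
    using that unfolding G(2) w_def wt_t_def pos_edges_def by (auto simp: case_prod_beta)
  have reweight: "tree_sum (K\<lparr>wt := w\<rparr>) = tree_sum K"
    if "arcs K = edges - {e} - {f}" "wt K = wt G" for K
    using that w_pos unfolding pedges_eq by (intro tree_sum_update_wt) simp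
  have "tree_sum (graph_t t) =
     tree_sum (delete_edge (delete_edge (graph_t t) e) f)
     + wt (graph_t t) f * tree_sum (contract_edge (delete_edge (graph_t t) e) f)
     + wt (graph_t t) e * (tree_sum (delete_edge (contract_edge (graph_t t) e) f)
                 + wt (graph_t t) f * tree_sum (contract_edge (contract_edge (graph_t t) e) f))"
    using ef_in_edges ef edgeD[of e] edgeD[of f] disj finite_edges
    by (intro tree_sum_delete_contract_two) (auto simp: graph_t_simps)
  also have "\<dots> =
     tree_sum (delete_edge (delete_edge G e) f)
     + t * gam (fst f) (snd f) * tree_sum (contract_edge (delete_edge G e) f)
     + t * gam (fst e) (snd e) * (tree_sum (delete_edge (contract_edge G e) f)
         + t * gam (fst f) (snd f) * tree_sum (contract_edge (contract_edge G e) f))"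
    unfolding wt_neg[of e, unfolded neg, simplified] wt_neg[of f, unfolded neg, simplified]
    unfolding graph_t delete_edge_update_wt contract_edge_update_wt
    by (simp add: reweight delete_edge_simps contract_edge_simps G(1))
  finally show ?thesis .
qed

end

theorem mainTheorem10:
  fixes N :: nat and gam :: "nat \<Rightarrow> nat \<Rightarrow> real" and e f :: "nat \<times> nat"
  assumes sg: "signed_graph N gam"
    and conn: "connected_by (sg_graph N gam) (sg_edges N gam)"
    and conn_pos: "connected_by (sg_graph N gam) (pos_edges N gam)"
    and neg: "neg_edges N gam = {e, f}" and ef: "e \<noteq> f"
    and disj: "{fst e, snd e} \<inter> {fst f, snd f} = {}"
  defines "G \<equiv> sg_graph N gam"
    and "ge \<equiv> gam (fst e) (snd e)" and "gf \<equiv> gam (fst f) (snd f)"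
  defines "p \<equiv> (\<lambda>t::real. t^2 * \<bar>ge * gf\<bar> * tree_sum (contract_edge (contract_edge G e) f)
              - t * (\<bar>ge\<bar> * tree_sum (delete_edge (contract_edge G e) f)
                     + \<bar>gf\<bar> * tree_sum (contract_edge (delete_edge G e) f))
              + tree_sum (delete_edge (delete_edge G e) f))"
  shows "(\<forall>t. tree_sum (sg_graph_t N gam t) = p t)
     \<and> bdd_above {t. t \<ge> 0 \<and> n_plus (laplacian_t N gam t) = 0}
     \<and> t_star N gam > 0 \<and> p (t_star N gam) = 0
     \<and> (\<forall>s>0. p s = 0 \<longrightarrow> t_star N gam \<le> s)"
proof -
  interpret pos_connected_sgraph N gam
    using sg conn_pos neg by unfold_locales auto
  have "ge < 0" "gf < 0" using neg unfolding ge_def gf_def neg_edges_def by auto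
  then have poly: "tree_sum (sg_graph_t N gam t) = p t" for t
    using tree_sum_two_neg_edges[OF neg ef disj, of t]
    unfolding p_def G_def ge_def[symmetric] gf_def[symmetric]
    by (simp add: abs_mult power2_eq_square algebra_simps)
  show ?thesis
    using tstar_least_positive_root unfolding poly by blast
qed

end
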